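(* Let $\pi$ be a matching of size $n$ with associated sequence $a_1<\dots<a_n$, and for an integer $p$ let $D_\pi(p)=\det_{1\le i,j\le n}\left[\binom{p+i-1}{a_i-j}\right]$. Then: (i) if $p\ge0$, $D_\pi(p)$ equals the number of fillings of $Y(\pi)$ with integers in $\{1,\dots,p+n-1\}$ that are strictly increasing along rows (left to right) and along columns (top to bottom); in particular $D_\pi(p)>0$; (ii) if $p\le-n$, $(-1)^{d(\pi)}D_\pi(p)$ equals the number of fillings of $Y(\pi)$ with integers in $\{0,1,\dots,|p|-n\}$ that are weakly increasing along rows and along columns; in particular $D_\pi(p)\neq0$, and $D_\pi(-n)=(-1)^{d(\pi)}$; (iii) if $1-n\le p\le -1$ and $\pi$ is not of the form $(\rho)_{|p|}$ for a matching $\rho$, then $D_\pi(p)=0$.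
   Context: A matching of size $n$ is a set of $n$ disjoint noncrossing pairs (arches) partitioning $\{1,\dots,2n\}$; $a_1<\dots<a_n$ are the smaller elements of its arches. The Young diagram $Y(\pi)$ has rows, from top to bottom, of lengths $a_n-n\ge\dots\ge a_1-1$; $d(\pi)=\sum_i(a_i-i)$ is its number of boxes. $(\rho)_q$ denotes the matching $\rho$ (of size $m$) surrounded by $q$ nested arches: arches $\{i,2m+2q+1-i\}$ for $1\le i\le q$ and $\{q+i,q+j\}$ for $\{i,j\}\in\rho$ (here $\rho$ may be the empty matching). Binomial coefficients are generalized: for an integer $x$ and integer $k$, $\binom{x}{k}=x(x-1)\cdots(x-k+1)/k!$ if $k\ge0$ and $\binom{x}{k}=0$ if $k<0$. *)

theory Defs
  imports Main "Jordan_Normal_Form.Determinant"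
begin

definition is_matching :: "nat \<Rightarrow> (nat \<times> nat) set \<Rightarrow> bool" where
  "is_matching n M \<longleftrightarrow>
     M \<subseteq> {(i,j). 1 \<le> i \<and> i < j \<and> j \<le> 2*n} \<and>
     (\<forall>x\<in>{1..2*n}. card {e\<in>M. fst e = x \<or> snd e = x} = 1) \<and>
     (\<forall>(a,b)\<in>M. \<forall>(c,d)\<in>M. \<not> (a < c \<and> c < b \<and> b < d))"

text \<open>The k-th smallest opener a_k (1-based index k).\<close>
definition opener :: "(nat \<times> nat) set \<Rightarrow> nat \<Rightarrow> nat" where
  "opener M k = sorted_list_of_set (fst ` M) ! (k - 1)"

definition young :: "nat \<Rightarrow> (nat \<times> nat) set \<Rightarrow> (nat \<times> nat) set" where
  "young n M = {(r,c). 1 \<le> r \<and> r \<le> n \<and> 1 \<le> c \<and> c \<le> opener M (n+1-r) - (n+1-r)}"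

definition dpi :: "nat \<Rightarrow> (nat \<times> nat) set \<Rightarrow> nat" where
  "dpi n M = (\<Sum>i=1..n. opener M i - i)"

definition gbin :: "int \<Rightarrow> int \<Rightarrow> int" where
  "gbin x k = (if k < 0 then 0 else (\<Prod>i<nat k. x - int i) div fact (nat k))"

text \<open>D_pi(p) = det [binom(p+i-1, a_i - j)]_{1<=i,j<=n}; matrix indices are 0-based.\<close>
definition Dpi :: "nat \<Rightarrow> (nat \<times> nat) set \<Rightarrow> int \<Rightarrow> int" where
  "Dpi n M p = det (mat n n (\<lambda>(i,j). gbin (p + int i) (int (opener M (i+1)) - int (j+1))))"

definition strict_fillings :: "(nat \<times> nat) set \<Rightarrow> int \<Rightarrow> int \<Rightarrow> ((nat \<times> nat) \<Rightarrow> int) set" where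
  "strict_fillings Y lo hi = {f. (\<forall>x. x \<notin> Y \<longrightarrow> f x = 0) \<and> (\<forall>x\<in>Y. f x \<in> {lo..hi}) \<and>
     (\<forall>r c c'. (r,c) \<in> Y \<and> (r,c') \<in> Y \<and> c < c' \<longrightarrow> f (r,c) < f (r,c')) \<and>
     (\<forall>r r' c. (r,c) \<in> Y \<and> (r',c) \<in> Y \<and> r < r' \<longrightarrow> f (r,c) < f (r',c))}"

definition weak_fillings :: "(nat \<times> nat) set \<Rightarrow> int \<Rightarrow> int \<Rightarrow> ((nat \<times> nat) \<Rightarrow> int) set" where
  "weak_fillings Y lo hi = {f. (\<forall>x. x \<notin> Y \<longrightarrow> f x = 0) \<and> (\<forall>x\<in>Y. f x \<in> {lo..hi}) \<and>
     (\<forall>r c c'. (r,c) \<in> Y \<and> (r,c') \<in> Y \<and> c < c' \<longrightarrow> f (r,c) \<le> f (r,c')) \<and>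
     (\<forall>r r' c. (r,c) \<in> Y \<and> (r',c) \<in> Y \<and> r < r' \<longrightarrow> f (r,c) \<le> f (r',c))}"

definition surround :: "nat \<Rightarrow> nat \<Rightarrow> (nat \<times> nat) set \<Rightarrow> (nat \<times> nat) set" where
  "surround q m \<rho> = {(i, 2*m + 2*q + 1 - i) | i. 1 \<le> i \<and> i \<le> q} \<union> {(q+i, q+j) | i j. (i,j) \<in> \<rho>}"

end

theory Submission
  imports Defs
begin

text \<open>
  Write \<open>A_i = a_{i+1}\<close> for the openers (0-based) and consider, more generally,
  \<open>binom_det n A t = det [binom(t_i, A_i - j)]\<close> for any increasing positive sequence \<open>A\<close> and
  nonnegative parameters \<open>t\<close> increasing in steps of 0 or 1; \<open>D_\<pi>(p)\<close> is the case \<open>t_i = p + i\<close>.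
  Pascal's rule applied to the first row with maximal parameter splits this determinant into two
  of the same kind, one with that parameter lowered and one where moreover one box of the
  diagram is removed (or which vanishes). Strict fillings whose rows are bounded by
  \<open>t_{n-r} + r - 1\<close> satisfy the same recursion, according to whether the last box of the
  corresponding row carries the largest admissible value. Dually,
  \<open>multichoose_det n A t = det [binom(t_i + A_i - j - 1, A_i - j)]\<close> counts weak fillings, and
  upper negation of binomials turns \<open>D_\<pi>(p)\<close> into \<open>(-1)^{d(\<pi>)}\<close> times this determinant with
  \<open>t_i = -p - i\<close>, giving part (ii). For part (iii), a matching not of the form \<open>(\<rho>)_s\<close>
  has an opener \<open>a_k > 2k + 1 - s\<close> with \<open>k \<ge> s\<close>, which forces a block of zeros in the matrix.
\<close>

section \<open>Generalized binomial coefficients\<close>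

text \<open>The binomial \<open>gbin\<close> of the statement agrees with the library's \<open>gbinomial\<close> on integers; we transfer the few
  identities we need: Pascal's rule, vanishing, and negation of the upper argument.\<close>

lemma gbin_nat: "gbin x (int m) = (\<Prod>i=0..<m. x - int i) div fact m"
  by (simp add: gbin_def atLeast0LessThan)

lemma gbin_negative [simp]: "k < 0 \<Longrightarrow> gbin x k = 0"
  by (simp add: gbin_def)

lemma gbin_zero [simp]: "gbin x 0 = 1"
  by (simp add: gbin_def)

lemma gbin_pascal: "gbin (x + 1) k = gbin x k + gbin x (k - 1)"
proof (cases "k \<le> 0")
  case True
  then show ?thesis by (cases "k = 0") auto
next
  case False
  define m where "m = nat k - 1"
  have m: "k = int (Suc m)" and m': "k - 1 = int m" using False unfolding m_def by auto
  show ?thesis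
    using gbinomial_int_Suc_Suc[of x m] unfolding gbinomial_prod_rev m m' gbin_nat
    by (simp add: gbin_nat)
qed

lemma gbin_eq_0_above: "0 \<le> x \<Longrightarrow> x < k \<Longrightarrow> gbin x k = 0"
  using zbinomial_eq_0_iff[of x "nat k"] unfolding gbinomial_prod_rev by (simp add: gbin_def atLeast0LessThan)

lemma gbin_0_left: "gbin 0 k = (if k = 0 then 1 else 0)"
proof (cases "k < 0")
  case False
  then show ?thesis using gbin_eq_0_above[of 0 k] by (cases "k = 0") auto
qed simp

text \<open>\<open>binom(k-1,k)\<close> is the multiset coefficient \<open>multichoose(0,k)\<close>.\<close>
lemma gbin_pred_diag: "gbin (k - 1) k = (if k = 0 then 1 else 0)"
proof (cases "k < 0")
  case False
  then show ?thesis using gbin_eq_0_above[of "k - 1" k] by (cases "k = 0") auto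
qed simp

lemma gbin_negate_upper: "gbin x (int m) = (-1) ^ m * gbin (int m - x - 1) (int m)"
  using gbinomial_int_negated_upper[of x m] unfolding gbinomial_prod_rev gbin_nat by simp

section \<open>Determinants of integer arrays\<close>

definition detf :: "nat \<Rightarrow> (nat \<Rightarrow> nat \<Rightarrow> int) \<Rightarrow> int" where
  "detf n F = det (mat n n (\<lambda>(i,j). F i j))"

lemma permutes_lessThan_bound: "p permutes {0..<(n::nat)} \<Longrightarrow> i < n \<Longrightarrow> p i < n"
  using permutes_in_image[of p "{0..<n}" i] by auto

lemma detf_leibniz:
  "detf n F = (\<Sum>p\<in>{p. p permutes {0..<n}}. signof p * (\<Prod>i=0..<n. F i (p i)))"
proof -
  have "detf n F = (\<Sum>p\<in>{p. p permutes {0..<n}}.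
      signof p * (\<Prod>i=0..<n. mat n n (\<lambda>(i,j). F i j) $$ (i, p i)))"
    unfolding detf_def by (rule det_def') simp
  also have "\<dots> = (\<Sum>p\<in>{p. p permutes {0..<n}}. signof p * (\<Prod>i=0..<n. F i (p i)))"
  proof (intro sum.cong refl arg_cong[where f="\<lambda>x. signof _ * x"] prod.cong)
    fix p i assume "p \<in> {p. p permutes {0..<n}}" "i \<in> {0..<n}"
    then show "mat n n (\<lambda>(i,j). F i j) $$ (i, p i) = F i (p i)"
      using permutes_lessThan_bound[of p n i] by auto
  qed
  finally show ?thesis .
qed

lemma detf_0: "detf 0 F = 1"
  unfolding detf_def by (rule det_dim_zero) simp

lemma detf_cong: "(\<And>i j. i < n \<Longrightarrow> j < n \<Longrightarrow> F i j = G i j) \<Longrightarrow> detf n F = detf n G"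
  unfolding detf_def by (intro arg_cong[where f=det] eq_matI) auto

lemma detf_id: "detf n (\<lambda>i j. if i = j then 1 else 0) = 1"
proof -
  have "mat n n (\<lambda>(i,j). if i = j then 1 else 0) = (1\<^sub>m n :: int mat)"
    by (rule eq_matI) auto
  then show ?thesis unfolding detf_def by simp
qed

lemma detf_row_add:
  assumes k: "k < n"
    and other_rows: "\<And>i j. i < n \<Longrightarrow> i \<noteq> k \<Longrightarrow> G i j = F i j \<and> H i j = F i j"
    and row_k: "\<And>j. F k j = G k j + H k j"
  shows "detf n F = detf n G + detf n H"
proof -
  have "(\<Prod>i=0..<n. F i (p i)) = (\<Prod>i=0..<n. G i (p i)) + (\<Prod>i=0..<n. H i (p i))"
    if "p permutes {0..<n}" for p
  proof -
    have kk: "k \<in> {0..<n}" using k by simp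
    have "(\<Prod>i\<in>{0..<n}-{k}. G i (p i)) = (\<Prod>i\<in>{0..<n}-{k}. F i (p i))"
      "(\<Prod>i\<in>{0..<n}-{k}. H i (p i)) = (\<Prod>i\<in>{0..<n}-{k}. F i (p i))"
      by (auto intro!: prod.cong simp: other_rows)
    then show ?thesis
      unfolding prod.remove[OF finite_atLeastLessThan kk] row_k by (simp add: algebra_simps)
  qed
  then show ?thesis unfolding detf_leibniz
    by (simp add: sum.distrib[symmetric] algebra_simps)
qed

lemma detf_zero_terms:
  assumes "\<And>p. p permutes {0..<n} \<Longrightarrow> \<exists>i<n. F i (p i) = 0"
  shows "detf n F = 0"
  unfolding detf_leibniz
proof (rule sum.neutral, rule ballI)
  fix p assume "p \<in> {p. p permutes {0..<n}}"
  then obtain i where "i < n" "F i (p i) = 0" using assms by auto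
  then have "(\<Prod>i=0..<n. F i (p i)) = 0" by (intro prod_zero) auto
  then show "signof p * (\<Prod>i=0..<n. F i (p i)) = 0" by simp
qed

lemma detf_zero_row:
  assumes "k < n" and "\<And>j. j < n \<Longrightarrow> F k j = 0"
  shows "detf n F = 0"
  by (rule detf_zero_terms) (use assms permutes_lessThan_bound in blast)

lemma detf_equal_rows:
  assumes "i < n" "j < n" "i \<noteq> j" and "\<And>l. l < n \<Longrightarrow> F i l = F j l"
  shows "detf n F = 0"
  unfolding detf_def
  by (rule det_identical_rows[of _ n i j]) (use assms in \<open>auto intro: eq_vecI\<close>)

text \<open>A zero block of rows \<open>k..n-1\<close> times columns \<open>0..k\<close> forces the determinant to vanish:
  these \<open>n - k\<close> rows have only \<open>n - k - 1\<close> columns left for a nonzero term.\<close>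
lemma detf_zero_block:
  assumes k: "k < n" and zero: "\<And>i j. k \<le> i \<Longrightarrow> i < n \<Longrightarrow> j \<le> k \<Longrightarrow> F i j = 0"
  shows "detf n F = 0"
proof (rule detf_zero_terms)
  fix p assume p: "p permutes {0..<n}"
  have "\<exists>i\<in>{k..<n}. p i \<le> k"
  proof (rule ccontr)
    assume "\<not> ?thesis"
    then have "p ` {k..<n} \<subseteq> {Suc k..<n}" using permutes_lessThan_bound[OF p] by force
    moreover have "inj_on p {k..<n}" using p by (meson permutes_inj inj_on_subset subset_UNIV)
    ultimately have "card {k..<n} \<le> card {Suc k..<n}"
      by (metis card_image card_mono finite_atLeastLessThan)
    then show False using k by simp
  qed
  then show "\<exists>i<n. F i (p i) = 0" using zero by auto
qed

lemma detf_scale: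
  "detf n (\<lambda>i j. c i * d j * F i j) = (\<Prod>i<n. c i) * (\<Prod>j<n. d j) * detf n F"
proof -
  have "(\<Prod>i=0..<n. c i * d (p i) * F i (p i)) =
     (\<Prod>i<n. c i) * (\<Prod>j<n. d j) * (\<Prod>i=0..<n. F i (p i))" if p: "p permutes {0..<n}" for p
  proof -
    have "(\<Prod>i=0..<n. d (p i)) = (\<Prod>j=0..<n. d j)"
      using prod.permute[OF p, of d] by (simp add: comp_def)
    then show ?thesis by (simp add: prod.distrib atLeast0LessThan)
  qed
  then show ?thesis unfolding detf_leibniz
    by (simp add: sum_distrib_left algebra_simps)
qed

section \<open>Shapes determined by increasing sequences\<close>

definition incr_seq :: "nat \<Rightarrow> (nat \<Rightarrow> int) \<Rightarrow> bool" where
  "incr_seq n A \<longleftrightarrow> (\<forall>i. Suc i < n \<longrightarrow> A i < A (Suc i)) \<and> (0 < n \<longrightarrow> 1 \<le> A 0)"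

text \<open>The diagram of \<open>A\<close>: row \<open>r\<close> (from the top, \<open>1 \<le> r \<le> n\<close>) has length
  \<open>A (n-r) - (n-r) - 1\<close>, i.e. \<open>a_k - k\<close> for \<open>k = n+1-r\<close> in 1-based notation.\<close>
definition shape :: "nat \<Rightarrow> (nat \<Rightarrow> int) \<Rightarrow> (nat \<times> nat) set" where
  "shape n A = {(r,c). 1 \<le> r \<and> r \<le> n \<and> 1 \<le> c \<and> int c \<le> A (n - r) - int (n - r) - 1}"

lemma shape_mem:
  "(r,c) \<in> shape n A \<longleftrightarrow> 1 \<le> r \<and> r \<le> n \<and> 1 \<le> c \<and> int c \<le> A (n - r) - int (n - r) - 1"
  by (simp add: shape_def)

lemma finite_shape: "finite (shape n A)"
proof -
  have "shape n A \<subseteq> (SIGMA r:{1..n}. {1..nat (A (n - r))})"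
    by (auto simp: shape_def)
  then show ?thesis by (rule finite_subset) auto
qed

lemma incr_seq_gap:
  assumes "incr_seq n A" "i \<le> j" "j < n"
  shows "A j - A i \<ge> int (j - i)"
  using assms(2,3)
proof (induction j)
  case (Suc j)
  show ?case
  proof (cases "i = Suc j")
    case False
    then have "i \<le> j" "A j - A i \<ge> int (j - i)" using Suc by simp_all
    moreover have "A j < A (Suc j)" using assms(1) Suc unfolding incr_seq_def by simp
    ultimately show ?thesis by (simp add: of_nat_diff)
  qed simp
qed simp

lemma incr_seq_lower: "incr_seq n A \<Longrightarrow> i < n \<Longrightarrow> A i \<ge> int i + 1"
  using incr_seq_gap[of n A 0 i] unfolding incr_seq_def by auto

text \<open>Row lengths weakly decrease downwards, so the diagram is closed upwards in each column.\<close>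
lemma incr_seq_row_length_mono:
  "incr_seq n A \<Longrightarrow> i \<le> j \<Longrightarrow> j < n \<Longrightarrow> A i - int i \<le> A j - int j"
  using incr_seq_gap[of n A i j] by (simp add: of_nat_diff)

lemma shape_closed_upwards:
  assumes "incr_seq n A" "(r2, c) \<in> shape n A" "1 \<le> r1" "r1 \<le> r2"
  shows "(r1, c) \<in> shape n A"
proof -
  have "A (n - r2) - int (n - r2) \<le> A (n - r1) - int (n - r1)"
    by (rule incr_seq_row_length_mono) (use assms in \<open>auto simp: shape_mem\<close>)
  then show ?thesis using assms by (auto simp: shape_mem)
qed

lemma incr_seq_minimal:
  assumes "incr_seq n A" "0 < n" "A (n-1) = int n" "j < n"
  shows "A j = int j + 1"
proof -
  have "A (n-1) - A j \<ge> int (n - 1 - j)" by (rule incr_seq_gap) (use assms in auto)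
  then show ?thesis using incr_seq_lower[OF assms(1) assms(4)] assms(2-4) by (simp add: of_nat_diff)
qed

lemma shape_empty_minimal:
  "incr_seq n A \<Longrightarrow> 0 < n \<Longrightarrow> A (n-1) = int n \<Longrightarrow> shape n A = {}"
  using incr_seq_minimal[of n A] by (auto simp: shape_def of_nat_diff)

lemma top_left_box_in_shape: "0 < n \<Longrightarrow> A (n-1) > int n \<Longrightarrow> (1,1) \<in> shape n A"
  by (auto simp: shape_mem of_nat_diff)

lemma finite_bounded_funs:
  assumes "finite Y" "finite B"
  shows "finite {f. (\<forall>x. x \<notin> Y \<longrightarrow> f x = (0::int)) \<and> (\<forall>x\<in>Y. f x \<in> B)}"
  by (rule finite_subset[OF _ finite_set_of_finite_funs[OF assms, of 0]]) auto

section \<open>Removing the last box of a row\<close>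

text \<open>Decreasing \<open>A i\<close> by one shortens row \<open>r = n - i\<close> by one box, the box \<open>(r, L)\<close>
  at its end. This yields again the diagram of an increasing sequence unless the row is
  \<^emph>\<open>blocked\<close>: it is empty (\<open>i = 0\<close>, \<open>A 0 = 1\<close>) or as short as the row below
  (\<open>A (i-1) = A i - 1\<close>).\<close>
locale row_corner =
  fixes n i :: nat and A :: "nat \<Rightarrow> int"
  assumes incr: "incr_seq n A" and i_lt: "i < n"
begin

definition r :: nat where "r = n - i"
definition L :: int where "L = A i - int i - 1"
definition A' :: "nat \<Rightarrow> int" where "A' = A(i := A i - 1)"
definition blocked :: bool where
  "blocked \<longleftrightarrow> (i = 0 \<and> A 0 = 1) \<or> (0 < i \<and> A (i-1) = A i - 1)"

lemma r_bounds: "1 \<le> r" "r \<le> n" "n - r = i"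
  using i_lt unfolding r_def by auto

lemma row_r_iff: "r' \<le> n \<Longrightarrow> n - r' = i \<longleftrightarrow> r' = r"
  using i_lt unfolding r_def by auto

lemma row_r_length: "(r, c) \<in> shape n A \<Longrightarrow> int c \<le> L"
  using r_bounds unfolding L_def by (auto simp: shape_mem)

lemma corner_in_shape: "1 \<le> L \<Longrightarrow> (r, nat L) \<in> shape n A"
  using r_bounds unfolding L_def by (auto simp: shape_mem)

lemma blocked_box_below:
  assumes "blocked" "1 \<le> L"
  shows "0 < i" "n - Suc r = i - 1" "(Suc r, nat L) \<in> shape n A"
proof -
  show i0: "0 < i" using assms unfolding blocked_def L_def by auto
  then have "A (i-1) = A i - 1" using assms(1) unfolding blocked_def by simp
  then show "n - Suc r = i - 1" "(Suc r, nat L) \<in> shape n A"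
    using i0 i_lt assms(2) unfolding r_def L_def by (auto simp: shape_mem of_nat_diff)
qed

lemma unblocked_L_pos: "\<not> blocked \<Longrightarrow> 1 \<le> L"
proof (cases "i = 0")
  case True
  then show "\<not> blocked \<Longrightarrow> 1 \<le> L"
    using incr_seq_lower[OF incr i_lt] unfolding blocked_def L_def by simp
next
  case False
  have "A (i-1) < A i" using incr i_lt False unfolding incr_seq_def
    by (metis Suc_pred' bot_nat_0.not_eq_extremum)
  moreover have "A (i-1) \<ge> int (i - 1) + 1" using incr_seq_lower[OF incr] i_lt by simp
  ultimately show "\<not> blocked \<Longrightarrow> 1 \<le> L"
    using False unfolding blocked_def L_def by (simp add: of_nat_diff)
qed

lemma unblocked_row_below: "\<not> blocked \<Longrightarrow> (Suc r, c) \<in> shape n A \<Longrightarrow> int c < L"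
proof -
  assume nb: "\<not> blocked" and c: "(Suc r, c) \<in> shape n A"
  then have i0: "0 < i" "n - Suc r = i - 1" using r_bounds unfolding r_def by (auto simp: shape_mem)
  then have "A (i-1) < A i" using incr i_lt unfolding incr_seq_def by (metis Suc_pred')
  then have "A (i-1) < A i - 1" using nb i0 unfolding blocked_def by auto
  then show "int c < L" using c i0 unfolding L_def by (auto simp: shape_mem of_nat_diff)
qed

lemma unblocked_incr_seq: "\<not> blocked \<Longrightarrow> incr_seq n A'"
  using incr unfolding incr_seq_def blocked_def A'_def
  by (auto simp: less_Suc_eq_0_disj)

lemma unblocked_shape:
  assumes nb: "\<not> blocked"
  shows "shape n A' = shape n A - {(r, nat L)}"
proof (rule Set.set_eqI)
  fix x :: "nat \<times> nat"
  obtain r' c where x: "x = (r', c)" by (cases x)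
  show "x \<in> shape n A' \<longleftrightarrow> x \<in> shape n A - {(r, nat L)}"
  proof (cases "r' = r")
    case True
    then show ?thesis using x r_bounds unblocked_L_pos[OF nb] unfolding A'_def L_def
      by (auto simp: shape_mem)
  next
    case False
    then show ?thesis using x row_r_iff unfolding A'_def by (auto simp: shape_mem)
  qed
qed

lemma corner_last_in_row: "(r', c') \<in> shape n A \<Longrightarrow> c < c' \<Longrightarrow> (r', c) \<noteq> (r, nat L)"
  using row_r_length by fastforce

lemma unblocked_corner_nothing_below:
  assumes nb: "\<not> blocked" and "(r2, c) \<in> shape n A" "r1 < r2"
  shows "(r1, c) \<noteq> (r, nat L)"
proof
  assume e: "(r1, c) = (r, nat L)"
  have "(Suc r, c) \<in> shape n A"
    using shape_closed_upwards[OF incr, of r2 c "Suc r"] assms e by (auto simp: shape_mem)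
  then have "int c < L" using unblocked_row_below[OF nb] by blast
  moreover have "c = nat L" using e by simp
  ultimately show False using unblocked_L_pos[OF nb] by linarith
qed

text \<open>Shortening a blocked row makes the determinant vanish: the row becomes zero (\<open>i = 0\<close>)
  or equal to the row above (when the two rows carry the same upper parameter).\<close>
lemma blocked_detf_zero:
  assumes "blocked" and neg: "\<And>x k. k < 0 \<Longrightarrow> \<phi> x k = 0"
    and same: "0 < i \<Longrightarrow> g (i - 1) = g i"
  shows "detf n (\<lambda>a j. \<phi> (g a) (A' a - int (j + 1))) = 0"
proof (cases "i = 0")
  case True
  then have "A' i = 0" using assms(1) unfolding blocked_def A'_def by simp
  then show ?thesis using i_lt neg by (intro detf_zero_row[of i]) auto
next
  case False
  then have "A (i-1) = A i - 1" using assms(1) unfolding blocked_def by simp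
  then show ?thesis using False i_lt same
    by (intro detf_equal_rows[of "i-1" n i]) (auto simp: A'_def)
qed

end

section \<open>Strict fillings: a Jacobi--Trudi type recursion\<close>

definition strict_fill :: "nat \<Rightarrow> (nat \<Rightarrow> int) \<Rightarrow> (nat \<Rightarrow> int) \<Rightarrow> ((nat \<times> nat) \<Rightarrow> int) set" where
  "strict_fill n A t = {f. (\<forall>x. x \<notin> shape n A \<longrightarrow> f x = 0) \<and>
     (\<forall>x\<in>shape n A. f x \<in> {1 .. t (n - fst x) + int (fst x) - 1}) \<and>
     (\<forall>r c c'. (r,c) \<in> shape n A \<and> (r,c') \<in> shape n A \<and> c < c' \<longrightarrow> f (r,c) < f (r,c')) \<and>
     (\<forall>r r' c. (r,c) \<in> shape n A \<and> (r',c) \<in> shape n A \<and> r < r' \<longrightarrow> f (r,c) < f (r',c))}"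

definition binom_det :: "nat \<Rightarrow> (nat \<Rightarrow> int) \<Rightarrow> (nat \<Rightarrow> int) \<Rightarrow> int" where
  "binom_det n A t = detf n (\<lambda>i j. gbin (t i) (A i - int (j+1)))"

definition unit_steps_up :: "nat \<Rightarrow> (nat \<Rightarrow> int) \<Rightarrow> bool" where
  "unit_steps_up n t \<longleftrightarrow>
     (\<forall>i<n. 0 \<le> t i) \<and> (\<forall>i. Suc i < n \<longrightarrow> t (Suc i) = t i \<or> t (Suc i) = t i + 1)"

lemma finite_strict_fill: "finite (strict_fill n A t)"
proof -
  let ?B = "\<Union>x\<in>shape n A. {1 .. t (n - fst x) + int (fst x) - 1}"
  have "strict_fill n A t \<subseteq> {f. (\<forall>x. x \<notin> shape n A \<longrightarrow> f x = 0) \<and> (\<forall>x\<in>shape n A. f x \<in> ?B)}"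
    unfolding strict_fill_def by blast
  moreover have "finite ?B" using finite_shape by auto
  ultimately show ?thesis using finite_bounded_funs[OF finite_shape] finite_subset by blast
qed

lemma strict_fill_empty_shape: "shape n A = {} \<Longrightarrow> strict_fill n A t = {\<lambda>_. 0}"
  unfolding strict_fill_def by auto

lemma unit_steps_up_mono:
  assumes "unit_steps_up n t" "i \<le> j" "j < n"
  shows "t i \<le> t j"
  using assms(2,3)
proof (induction j)
  case (Suc j)
  show ?case
  proof (cases "i = Suc j")
    case False
    then have "t i \<le> t j" using Suc by simp
    moreover have "t (Suc j) = t j \<or> t (Suc j) = t j + 1"
      using assms(1) Suc unfolding unit_steps_up_def by simp
    ultimately show ?thesis by auto
  qed simp
qed simp

text \<open>The situation of one recursion step: \<open>T \<ge> 1\<close> is the largest upper parameter and \<open>i\<close>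
  the first row index attaining it. Pascal's rule in row \<open>i\<close> splits the determinant into
  one with \<open>t_i\<close> lowered and one where moreover row \<open>r = n - i\<close> loses its last box; on the
  side of fillings this is the distinction whether that box carries the maximal value \<open>max_entry\<close>.\<close>
locale strict_corner = row_corner +
  fixes t :: "nat \<Rightarrow> int" and T :: int
  assumes T_pos: "1 \<le> T"
    and t_top: "\<And>j. i \<le> j \<Longrightarrow> j < n \<Longrightarrow> t j = T"
    and t_before: "0 < i \<Longrightarrow> t (i - 1) = T - 1"
begin

definition t' :: "nat \<Rightarrow> int" where "t' = t(i := T - 1)"
definition max_entry :: int where "max_entry = T + int r - 1"
definition at_max :: "((nat \<times> nat) \<Rightarrow> int) \<Rightarrow> bool" where
  "at_max f \<longleftrightarrow> 1 \<le> L \<and> f (r, nat L) = max_entry"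

lemma t_i: "t i = T"
  using t_top[of i] i_lt by simp

lemma bound_row_r: "t (n - r) + int r - 1 = max_entry" "t' (n - r) + int r - 1 = max_entry - 1"
  using r_bounds t_i unfolding max_entry_def t'_def by simp_all

lemma bound_other_rows: "r' \<le> n \<Longrightarrow> r' \<noteq> r \<Longrightarrow> t' (n - r') = t (n - r')"
  using row_r_iff unfolding t'_def by simp

lemma binom_det_split: "binom_det n A t = binom_det n A t' + binom_det n A' t'"
  unfolding binom_det_def
proof (rule detf_row_add[OF i_lt])
  fix j
  have e: "A' i - int (j + 1) = (A i - int (j + 1)) - 1" "t' i = T - 1"
    unfolding A'_def t'_def by simp_all
  show "gbin (t i) (A i - int (j + 1)) = gbin (t' i) (A i - int (j + 1)) + gbin (t' i) (A' i - int (j + 1))"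
    unfolding e using gbin_pascal[of "T - 1" "A i - int (j + 1)"] t_i by simp
next
  fix a j assume "a \<noteq> i"
  then show "gbin (t' a) (A a - int (j + 1)) = gbin (t a) (A a - int (j + 1)) \<and>
      gbin (t' a) (A' a - int (j + 1)) = gbin (t a) (A a - int (j + 1))"
    unfolding t'_def A'_def by simp
qed

lemma binom_det_blocked: "blocked \<Longrightarrow> binom_det n A' t' = 0"
  unfolding binom_det_def
proof (rule blocked_detf_zero)
  show "0 < i \<Longrightarrow> t' (i - 1) = t' i" using t_before unfolding t'_def by simp
qed simp_all

lemma unit_steps_up_lowered:
  assumes "unit_steps_up n t"
  shows "unit_steps_up n t'"
  unfolding unit_steps_up_def
proof (intro conjI allI impI)
  fix j assume "j < n"
  then show "0 \<le> t' j" using assms T_pos unfolding unit_steps_up_def t'_def by simp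
next
  fix j assume j: "Suc j < n"
  show "t' (Suc j) = t' j \<or> t' (Suc j) = t' j + 1"
  proof (cases "Suc j = i")
    case True
    then show ?thesis using t_before unfolding t'_def by auto
  next
    case False
    then show ?thesis
      using t_top[of "Suc j"] j assms unfolding t'_def unit_steps_up_def by (cases "j = i") auto
  qed
qed

lemma params_decrease: "(\<Sum>j<n. nat (t' j)) < (\<Sum>j<n. nat (t j))"
proof (rule sum_strict_mono_ex1)
  show "\<forall>x\<in>{..<n}. nat (t' x) \<le> nat (t x)" using t_i unfolding t'_def by auto
  show "\<exists>a\<in>{..<n}. nat (t' a) < nat (t a)"
    using i_lt t_i T_pos unfolding t'_def by (intro bexI[of _ i]) auto
qed simp

lemma strict_fill_not_at_max: "{f \<in> strict_fill n A t. \<not> at_max f} = strict_fill n A t'"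
proof (intro equalityI subsetI)
  fix f assume "f \<in> {f \<in> strict_fill n A t. \<not> at_max f}"
  then have f: "f \<in> strict_fill n A t" and nt: "\<not> at_max f" by auto
  have "f (r', c) \<in> {1 .. t' (n - r') + int r' - 1}" if x: "(r', c) \<in> shape n A" for r' c
  proof -
    have b: "f (r', c) \<in> {1 .. t (n - r') + int r' - 1}" using f x unfolding strict_fill_def by auto
    show ?thesis
    proof (cases "r' = r")
      case False
      then show ?thesis using b bound_other_rows[of r'] x by (auto simp: shape_mem)
    next
      case True
      have Lc: "int c \<le> L" "1 \<le> c" using row_r_length x True by (auto simp: shape_mem)
      have inL: "(r, nat L) \<in> shape n A" using corner_in_shape Lc by simp
      have le: "f (r, nat L) \<le> max_entry" using f inL bound_row_r unfolding strict_fill_def by force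
      have "f (r, c) \<le> max_entry - 1"
      proof (cases "int c = L")
        case True
        then have "c = nat L" by simp
        then show ?thesis using le nt Lc unfolding at_max_def by auto
      next
        case False
        then have "f (r, c) < f (r, nat L)"
          using f x True inL Lc unfolding strict_fill_def by auto
        then show ?thesis using le by simp
      qed
      then show ?thesis using b True bound_row_r by simp
    qed
  qed
  then show "f \<in> strict_fill n A t'" using f unfolding strict_fill_def by auto
next
  fix f assume f: "f \<in> strict_fill n A t'"
  have "f (r', c) \<in> {1 .. t (n - r') + int r' - 1}" if x: "(r', c) \<in> shape n A" for r' c
  proof -
    have "f (r', c) \<in> {1 .. t' (n - r') + int r' - 1}" using f x unfolding strict_fill_def by auto
    then show ?thesis using bound_other_rows[of r'] bound_row_r x
      by (cases "r' = r") (auto simp: shape_mem)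
  qed
  moreover have "\<not> at_max f"
  proof
    assume "at_max f"
    then have "1 \<le> L" "f (r, nat L) = max_entry" unfolding at_max_def by auto
    moreover have "f (r, nat L) \<le> t' (n - r) + int r - 1"
      using f corner_in_shape[OF \<open>1 \<le> L\<close>] unfolding strict_fill_def by force
    ultimately show False using bound_row_r by simp
  qed
  ultimately show "f \<in> {f \<in> strict_fill n A t. \<not> at_max f}"
    using f unfolding strict_fill_def by auto
qed

text \<open>In a blocked row the last box cannot carry \<open>max_entry\<close>: the box below it would need a
  larger value, but the next row is bounded by \<open>max_entry\<close> as well.\<close>
lemma strict_fill_at_max_blocked: "blocked \<Longrightarrow> {f \<in> strict_fill n A t. at_max f} = {}"
proof (rule ccontr)
  assume "blocked" "{f \<in> strict_fill n A t. at_max f} \<noteq> {}"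
  then obtain f where f: "f \<in> strict_fill n A t" "1 \<le> L" "f (r, nat L) = max_entry"
    unfolding at_max_def by auto
  note below = blocked_box_below[OF \<open>blocked\<close> f(2)]
  have "f (r, nat L) < f (Suc r, nat L)"
    using f(1) below(3) corner_in_shape[OF f(2)] unfolding strict_fill_def by blast
  moreover have "f (Suc r, nat L) \<le> t (n - Suc r) + int (Suc r) - 1"
    using f(1) below(3) unfolding strict_fill_def by force
  ultimately show False using f(3) below t_before unfolding max_entry_def by simp
qed

lemma strict_fill_at_max_restrict:
  assumes nb: "\<not> blocked" and f: "f \<in> strict_fill n A t" and at: "at_max f"
  shows "f((r, nat L) := 0) \<in> strict_fill n A' t'"
proof -
  let ?p = "(r, nat L)" and ?h = "f((r, nat L) := 0)"
  note shape' = unblocked_shape[OF nb]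
  have fp: "f ?p = max_entry" using at unfolding at_max_def by simp
  have hv: "\<And>x. x \<in> shape n A' \<Longrightarrow> ?h x = f x" using shape' by auto
  have bnd: "?h (r', c) \<in> {1 .. t' (n - r') + int r' - 1}" if x: "(r', c) \<in> shape n A'" for r' c
  proof -
    have xY: "(r', c) \<in> shape n A" "(r', c) \<noteq> ?p" using x shape' by auto
    have b: "f (r', c) \<in> {1 .. t (n - r') + int r' - 1}" using f xY unfolding strict_fill_def by auto
    show ?thesis
    proof (cases "r' = r")
      case False
      then show ?thesis using b hv[OF x] bound_other_rows[of r'] xY by (auto simp: shape_mem)
    next
      case True
      have "int c \<le> L" using row_r_length xY True by simp
      then have "c < nat L" using xY True by auto
      then have "f (r, c) < f ?p"
        using f xY True corner_in_shape[OF unblocked_L_pos[OF nb]] unfolding strict_fill_def by blast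
      then show ?thesis using b hv[OF x] True bound_row_r fp by simp
    qed
  qed
  have "\<forall>x\<in>shape n A'. ?h x \<in> {1 .. t' (n - fst x) + int (fst x) - 1}"
    using bnd[of "fst x" "snd x" for x] by (simp del: fun_upd_apply)
  moreover have "\<forall>x. x \<notin> shape n A' \<longrightarrow> ?h x = 0"
    using f shape' unfolding strict_fill_def by auto
  moreover have "\<forall>r c c'. (r,c) \<in> shape n A' \<and> (r,c') \<in> shape n A' \<and> c < c' \<longrightarrow> ?h (r,c) < ?h (r,c')"
    using f hv shape' unfolding strict_fill_def by auto
  moreover have "\<forall>r r' c. (r,c) \<in> shape n A' \<and> (r',c) \<in> shape n A' \<and> r < r' \<longrightarrow> ?h (r,c) < ?h (r',c)"
    using f hv shape' unfolding strict_fill_def by auto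
  ultimately show ?thesis unfolding strict_fill_def by blast
qed

text \<open>In a filling with the lowered bounds, all entries in rows weakly above row \<open>r\<close> stay
  below \<open>max_entry\<close>: row \<open>r\<close> now has bound \<open>max_entry - 1\<close>, and a row \<open>r' < r\<close> has bound
  \<open>T + r' - 1\<close>.\<close>
lemma strict_fill_rows_above_bounded:
  assumes g: "g \<in> strict_fill n A' t'" and a: "(r', c) \<in> shape n A'" "r' \<le> r"
  shows "g (r', c) \<le> max_entry - 1"
proof -
  have gb: "g (r', c) \<le> t' (n - r') + int r' - 1" using g a(1) unfolding strict_fill_def by force
  show ?thesis
  proof (cases "r' = r")
    case True
    then show ?thesis using gb bound_row_r by simp
  next
    case False
    have rr: "1 \<le> r'" "r' \<le> n" using a by (auto simp: shape_mem)
    then have "i \<le> n - r'" "n - r' < n" using a False unfolding r_def by auto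
    then have "t' (n - r') = T" using bound_other_rows[of r'] t_top rr False by simp
    then show ?thesis using gb a(2) False unfolding max_entry_def by simp
  qed
qed

text \<open>Conversely, putting \<open>max_entry\<close> into the removed box extends every filling of the smaller
  diagram: its neighbours to the left and above are bounded by \<open>max_entry - 1\<close>, and no box lies
  to its right or below it.\<close>
lemma strict_fill_at_max_extend:
  assumes nb: "\<not> blocked" and g: "g \<in> strict_fill n A' t'"
  shows "g((r, nat L) := max_entry) \<in> strict_fill n A t" "at_max (g((r, nat L) := max_entry))"
proof -
  let ?p = "(r, nat L)" and ?h = "g((r, nat L) := max_entry)"
  note shape' = unblocked_shape[OF nb] and L1 = unblocked_L_pos[OF nb]
  have pin: "?p \<in> shape n A" using corner_in_shape L1 by simp
  have gY: "\<And>x. x \<in> shape n A \<Longrightarrow> x \<noteq> ?p \<Longrightarrow> x \<in> shape n A'" using shape' by auto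
  have gb: "\<And>r' c. (r', c) \<in> shape n A' \<Longrightarrow> g (r', c) \<in> {1 .. t' (n - r') + int r' - 1}"
    using g unfolding strict_fill_def by force
  have max_pos: "1 \<le> max_entry" using T_pos r_bounds unfolding max_entry_def by simp
  note below = strict_fill_rows_above_bounded[OF g]
  have "\<forall>x. x \<notin> shape n A \<longrightarrow> ?h x = 0"
    using g pin shape' unfolding strict_fill_def by auto
  moreover have "\<forall>x\<in>shape n A. ?h x \<in> {1 .. t (n - fst x) + int (fst x) - 1}"
  proof
    fix x assume x: "x \<in> shape n A"
    obtain r' c where xe: "x = (r', c)" by (cases x)
    show "?h x \<in> {1 .. t (n - fst x) + int (fst x) - 1}"
    proof (cases "x = ?p")
      case True
      then show ?thesis using max_pos bound_row_r by simp
    next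
      case False
      then show ?thesis using gb[of r' c] gY[OF x False] xe x bound_other_rows[of r'] bound_row_r
        by (cases "r' = r") (auto simp: shape_mem)
    qed
  qed
  moreover have "?h (r1, c) < ?h (r1, c')"
    if a: "(r1, c) \<in> shape n A" "(r1, c') \<in> shape n A" "c < c'" for r1 c c'
  proof (cases "(r1, c') = ?p")
    case True
    then have "(r1, c) \<in> shape n A'" using gY a by auto
    then show ?thesis using below[of r1 c] True a by auto
  next
    case False
    then have "(r1, c) \<noteq> ?p" using corner_last_in_row[OF a(2,3)] by blast
    then show ?thesis using g gY a False unfolding strict_fill_def by auto
  qed
  moreover have "?h (r1, c) < ?h (r2, c)"
    if a: "(r1, c) \<in> shape n A" "(r2, c) \<in> shape n A" "r1 < r2" for r1 r2 c
  proof (cases "(r2, c) = ?p")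
    case True
    then have "(r1, c) \<in> shape n A'" using gY a by auto
    then show ?thesis using below[of r1 c] True a by auto
  next
    case False
    then have "(r1, c) \<noteq> ?p" using unblocked_corner_nothing_below[OF nb a(2,3)] by blast
    then show ?thesis using g gY a False unfolding strict_fill_def by auto
  qed
  ultimately show "?h \<in> strict_fill n A t" unfolding strict_fill_def by blast
  show "at_max ?h" using L1 unfolding at_max_def by simp
qed

lemma card_strict_fill_at_max:
  assumes nb: "\<not> blocked"
  shows "card {f \<in> strict_fill n A t. at_max f} = card (strict_fill n A' t')"
proof (rule bij_betw_same_card[of "\<lambda>f. f((r, nat L) := 0)"],
    rule bij_betw_byWitness[where f'="\<lambda>g. g((r, nat L) := max_entry)"])
  show "\<forall>f\<in>{f \<in> strict_fill n A t. at_max f}. f((r, nat L) := 0, (r, nat L) := max_entry) = f"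
    unfolding at_max_def by auto
  show "\<forall>g\<in>strict_fill n A' t'. g((r, nat L) := max_entry, (r, nat L) := 0) = g"
    using unblocked_shape[OF nb] unfolding strict_fill_def by auto
qed (use strict_fill_at_max_restrict[OF nb] strict_fill_at_max_extend[OF nb] in auto)

lemma card_strict_fill_split:
  "card (strict_fill n A t) =
     card (strict_fill n A t') + (if blocked then 0 else card (strict_fill n A' t'))"
proof -
  have "strict_fill n A t = {f \<in> strict_fill n A t. \<not> at_max f} \<union> {f \<in> strict_fill n A t. at_max f}"
    by auto
  then have "card (strict_fill n A t) =
      card {f \<in> strict_fill n A t. \<not> at_max f} + card {f \<in> strict_fill n A t. at_max f}"
    by (metis (no_types, lifting) card_Un_disjoint disjoint_iff finite_Un finite_strict_fill mem_Collect_eq)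
  then show ?thesis
    using strict_fill_not_at_max strict_fill_at_max_blocked card_strict_fill_at_max
    by (cases blocked) simp_all
qed

end

text \<open>When all upper parameters vanish the determinant is that of a unitriangular matrix
  if the diagram is empty, and has a zero last row otherwise; no box can be filled then.\<close>
lemma binom_det_zero_params:
  assumes incr: "incr_seq n A" and n: "0 < n" and t0: "\<And>j. j < n \<Longrightarrow> t j = 0"
  shows "binom_det n A t = int (card (strict_fill n A t))"
proof (cases "A (n-1) = int n")
  case True
  have "binom_det n A t = detf n (\<lambda>i j. if i = j then 1 else 0)"
    unfolding binom_det_def
    by (rule detf_cong) (simp add: t0 incr_seq_minimal[OF incr n True] gbin_0_left)
  then show ?thesis by (simp add: detf_id strict_fill_empty_shape shape_empty_minimal[OF incr n True])
next
  case False
  then have big: "A (n-1) > int n" using incr_seq_lower[OF incr, of "n-1"] n by simp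
  have "binom_det n A t = 0" unfolding binom_det_def
    by (rule detf_zero_row[of "n-1"]) (use n big t0 in \<open>auto simp: gbin_0_left\<close>)
  moreover have "strict_fill n A t = {}"
  proof (rule ccontr)
    assume "strict_fill n A t \<noteq> {}"
    then obtain f where "f \<in> strict_fill n A t" by auto
    then have "f (1,1) \<in> {1 .. t (n - 1) + 1 - 1}"
      using top_left_box_in_shape[of n A, OF n big] unfolding strict_fill_def by force
    then show False using t0[of "n-1"] n by simp
  qed
  ultimately show ?thesis by simp
qed

lemma first_max_index:
  assumes st: "unit_steps_up n t" and n: "0 < n" and T: "t (n-1) = T"
  defines "i \<equiv> LEAST j. t j = T"
  shows "i < n" "\<And>j. i \<le> j \<Longrightarrow> j < n \<Longrightarrow> t j = T" "0 < i \<Longrightarrow> t (i - 1) = T - 1"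
proof -
  have ti: "t i = T" unfolding i_def by (rule LeastI[of _ "n-1"]) (use T in simp)
  have ile: "i \<le> n - 1" unfolding i_def by (rule Least_le) (use T in simp)
  then show "i < n" using n by simp
  show "t j = T" if "i \<le> j" "j < n" for j
    using unit_steps_up_mono[OF st, of i j] unit_steps_up_mono[OF st, of j "n-1"] that ti T by simp
  assume "0 < i"
  have "t (i-1) \<noteq> T"
  proof
    assume "t (i-1) = T"
    then have "i \<le> i - 1" unfolding i_def by (rule Least_le)
    then show False using \<open>0 < i\<close> by simp
  qed
  moreover have "Suc (i-1) < n" using \<open>0 < i\<close> ile n by simp
  then have "t (Suc (i-1)) = t (i-1) \<or> t (Suc (i-1)) = t (i-1) + 1"
    using st unfolding unit_steps_up_def by blast
  ultimately show "t (i - 1) = T - 1" using ti \<open>0 < i\<close> by auto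
qed

theorem binom_det_eq_card_strict_fill:
  assumes "incr_seq n A" "unit_steps_up n t"
  shows "binom_det n A t = int (card (strict_fill n A t))"
  using assms
proof (induction "\<Sum>i<n. nat (t i)" arbitrary: A t rule: less_induct)
  case less
  note incr = less.prems(1) and st = less.prems(2)
  show ?case
  proof (cases "n = 0")
    case True
    then show ?thesis by (simp add: binom_det_def detf_0 strict_fill_empty_shape shape_def)
  next
    case False
    then have n: "0 < n" by simp
    define T where "T = t (n-1)"
    have t_nonneg: "\<And>j. j < n \<Longrightarrow> 0 \<le> t j" using st unfolding unit_steps_up_def by auto
    show ?thesis
    proof (cases "T = 0")
      case True
      have "t j = 0" if "j < n" for j
        using unit_steps_up_mono[OF st, of j "n-1"] t_nonneg[OF that] True that unfolding T_def by simp
      then show ?thesis by (rule binom_det_zero_params[OF incr n])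
    next
      case False
      then have T1: "1 \<le> T" using t_nonneg[of "n-1"] n unfolding T_def by simp
      define i where "i = (LEAST j. t j = T)"
      note i = first_max_index[OF st n T_def[symmetric], folded i_def]
      interpret strict_corner n i A t T
        by unfold_locales (use incr i T1 in auto)
      note st' = unit_steps_up_lowered[OF st]
      have IH1: "binom_det n A t' = int (card (strict_fill n A t'))"
        by (rule less.hyps[OF params_decrease incr st'])
      show ?thesis
      proof (cases blocked)
        case True
        then show ?thesis using binom_det_split binom_det_blocked card_strict_fill_split IH1 by simp
      next
        case False
        have IH2: "binom_det n A' t' = int (card (strict_fill n A' t'))"
          by (rule less.hyps[OF params_decrease unblocked_incr_seq[OF False] st'])
        then show ?thesis using binom_det_split card_strict_fill_split IH1 False by simp
      qed
    qed
  qed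
qed

section \<open>Weak fillings: the dual recursion\<close>

definition weak_fill :: "nat \<Rightarrow> (nat \<Rightarrow> int) \<Rightarrow> (nat \<Rightarrow> int) \<Rightarrow> ((nat \<times> nat) \<Rightarrow> int) set" where
  "weak_fill n A t = {f. (\<forall>x. x \<notin> shape n A \<longrightarrow> f x = 0) \<and>
     (\<forall>x\<in>shape n A. f x \<in> {0 .. t (n - fst x) - int (fst x)}) \<and>
     (\<forall>r c c'. (r,c) \<in> shape n A \<and> (r,c') \<in> shape n A \<and> c < c' \<longrightarrow> f (r,c) \<le> f (r,c')) \<and>
     (\<forall>r r' c. (r,c) \<in> shape n A \<and> (r',c) \<in> shape n A \<and> r < r' \<longrightarrow> f (r,c) \<le> f (r',c))}"

definition multichoose_det :: "nat \<Rightarrow> (nat \<Rightarrow> int) \<Rightarrow> (nat \<Rightarrow> int) \<Rightarrow> int" where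
  "multichoose_det n A t = detf n (\<lambda>i j. gbin (t i + (A i - int (j+1)) - 1) (A i - int (j+1)))"

definition unit_steps_down :: "nat \<Rightarrow> (nat \<Rightarrow> int) \<Rightarrow> bool" where
  "unit_steps_down n t \<longleftrightarrow>
     (\<forall>i<n. 0 \<le> t i) \<and> (\<forall>i. Suc i < n \<longrightarrow> t (Suc i) = t i \<or> t (Suc i) = t i - 1)"

lemma finite_weak_fill: "finite (weak_fill n A t)"
proof -
  let ?B = "\<Union>x\<in>shape n A. {0 .. t (n - fst x) - int (fst x)}"
  have "weak_fill n A t \<subseteq> {f. (\<forall>x. x \<notin> shape n A \<longrightarrow> f x = 0) \<and> (\<forall>x\<in>shape n A. f x \<in> ?B)}"
    unfolding weak_fill_def by blast
  moreover have "finite ?B" using finite_shape by auto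
  ultimately show ?thesis using finite_bounded_funs[OF finite_shape] finite_subset by blast
qed

lemma weak_fill_empty_shape: "shape n A = {} \<Longrightarrow> weak_fill n A t = {\<lambda>_. 0}"
  unfolding weak_fill_def by auto

lemma unit_steps_down_mono:
  assumes "unit_steps_down n t" "i \<le> j" "j < n"
  shows "t j \<le> t i"
  using assms(2,3)
proof (induction j)
  case (Suc j)
  show ?case
  proof (cases "i = Suc j")
    case False
    then have "t j \<le> t i" using Suc by simp
    moreover have "t (Suc j) = t j \<or> t (Suc j) = t j - 1"
      using assms(1) Suc unfolding unit_steps_down_def by simp
    ultimately show ?thesis by auto
  qed simp
qed simp

text \<open>One recursion step: \<open>T \<ge> 1\<close> is the largest upper parameter and \<open>i\<close> the last index
  attaining it. Pascal's rule in row \<open>i\<close> splits the determinant into one with \<open>t_i\<close> lowered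
  and one where row \<open>r = n - i\<close> loses its last box (keeping \<open>t\<close>); on the side of fillings
  this distinguishes whether that box carries the maximal value \<open>max_entry\<close>.\<close>
locale weak_corner = row_corner +
  fixes t :: "nat \<Rightarrow> int" and T :: int
  assumes T_pos: "1 \<le> T"
    and t_top: "\<And>j. j \<le> i \<Longrightarrow> t j = T"
    and t_after: "Suc i < n \<Longrightarrow> t (Suc i) = T - 1"
begin

definition t' :: "nat \<Rightarrow> int" where "t' = t(i := T - 1)"
definition max_entry :: int where "max_entry = T - int r"
definition at_max :: "((nat \<times> nat) \<Rightarrow> int) \<Rightarrow> bool" where
  "at_max f \<longleftrightarrow> 1 \<le> L \<and> f (r, nat L) = max_entry"

lemma t_i: "t i = T"
  using t_top[of i] by simp

lemma bound_row_r: "t (n - r) - int r = max_entry" "t' (n - r) - int r = max_entry - 1"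
  using r_bounds t_i unfolding max_entry_def t'_def by simp_all

lemma bound_other_rows: "r' \<le> n \<Longrightarrow> r' \<noteq> r \<Longrightarrow> t' (n - r') = t (n - r')"
  using row_r_iff unfolding t'_def by simp

lemma multichoose_det_split: "multichoose_det n A t = multichoose_det n A t' + multichoose_det n A' t"
  unfolding multichoose_det_def
proof (rule detf_row_add[OF i_lt])
  fix j
  define k where "k = A i - int (j + 1)"
  have k': "A' i - int (j + 1) = k - 1" unfolding k_def A'_def by simp
  have args: "t i + k - 1 = (T + k - 2) + 1" "t' i + k - 1 = T + k - 2"
    "t i + (k - 1) - 1 = T + k - 2"
    using t_i unfolding t'_def by simp_all
  show "gbin (t i + (A i - int (j + 1)) - 1) (A i - int (j + 1)) =
      gbin (t' i + (A i - int (j + 1)) - 1) (A i - int (j + 1)) +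
      gbin (t i + (A' i - int (j + 1)) - 1) (A' i - int (j + 1))"
    unfolding k_def[symmetric] k' args by (rule gbin_pascal)
next
  fix a j assume "a \<noteq> i"
  then show "gbin (t' a + (A a - int (j + 1)) - 1) (A a - int (j + 1)) =
      gbin (t a + (A a - int (j + 1)) - 1) (A a - int (j + 1)) \<and>
      gbin (t a + (A' a - int (j + 1)) - 1) (A' a - int (j + 1)) =
      gbin (t a + (A a - int (j + 1)) - 1) (A a - int (j + 1))"
    unfolding t'_def A'_def by simp
qed

lemma multichoose_det_blocked: "blocked \<Longrightarrow> multichoose_det n A' t = 0"
  unfolding multichoose_det_def
proof (rule blocked_detf_zero[where \<phi>="\<lambda>x k. gbin (x + k - 1) k"])
  show "0 < i \<Longrightarrow> t (i - 1) = t i" using t_top by simp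
qed simp_all

lemma unit_steps_down_lowered:
  assumes "unit_steps_down n t"
  shows "unit_steps_down n t'"
  unfolding unit_steps_down_def
proof (intro conjI allI impI)
  fix j assume "j < n"
  then show "0 \<le> t' j" using assms T_pos unfolding unit_steps_down_def t'_def by simp
next
  fix j assume j: "Suc j < n"
  show "t' (Suc j) = t' j \<or> t' (Suc j) = t' j - 1"
  proof (cases "j = i")
    case True
    then show ?thesis using t_after j unfolding t'_def by auto
  next
    case False
    then show ?thesis
      using t_top[of j] j assms unfolding t'_def unit_steps_down_def by (cases "Suc j = i") auto
  qed
qed

lemma params_decrease_lowered: "(\<Sum>j<n. nat (t' j) + nat (A j)) < (\<Sum>j<n. nat (t j) + nat (A j))"
proof (rule sum_strict_mono_ex1)
  show "\<forall>x\<in>{..<n}. nat (t' x) + nat (A x) \<le> nat (t x) + nat (A x)"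
    using t_i unfolding t'_def by auto
  show "\<exists>a\<in>{..<n}. nat (t' a) + nat (A a) < nat (t a) + nat (A a)"
    using i_lt t_i T_pos unfolding t'_def by (intro bexI[of _ i]) auto
qed simp

lemma params_decrease_shortened: "(\<Sum>j<n. nat (t j) + nat (A' j)) < (\<Sum>j<n. nat (t j) + nat (A j))"
proof (rule sum_strict_mono_ex1)
  show "\<forall>x\<in>{..<n}. nat (t x) + nat (A' x) \<le> nat (t x) + nat (A x)"
    unfolding A'_def by auto
  show "\<exists>a\<in>{..<n}. nat (t a) + nat (A' a) < nat (t a) + nat (A a)"
    using i_lt incr_seq_lower[OF incr i_lt] unfolding A'_def by (intro bexI[of _ i]) auto
qed simp

lemma weak_fill_not_at_max: "{f \<in> weak_fill n A t. \<not> at_max f} = weak_fill n A t'"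
proof (intro equalityI subsetI)
  fix f assume "f \<in> {f \<in> weak_fill n A t. \<not> at_max f}"
  then have f: "f \<in> weak_fill n A t" and nt: "\<not> at_max f" by auto
  have "f (r', c) \<in> {0 .. t' (n - r') - int r'}" if x: "(r', c) \<in> shape n A" for r' c
  proof -
    have b: "f (r', c) \<in> {0 .. t (n - r') - int r'}" using f x unfolding weak_fill_def by auto
    show ?thesis
    proof (cases "r' = r")
      case False
      then show ?thesis using b bound_other_rows[of r'] x by (auto simp: shape_mem)
    next
      case True
      have Lc: "int c \<le> L" "1 \<le> c" using row_r_length x True by (auto simp: shape_mem)
      have inL: "(r, nat L) \<in> shape n A" using corner_in_shape Lc by simp
      have "f (r, nat L) \<le> max_entry" using f inL bound_row_r unfolding weak_fill_def by force
      then have le: "f (r, nat L) \<le> max_entry - 1" using nt Lc unfolding at_max_def by auto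
      have "f (r, c) \<le> f (r, nat L)"
      proof (cases "int c = L")
        case False
        then show ?thesis using f x True inL Lc unfolding weak_fill_def by auto
      next
        case True
        then have "c = nat L" by simp
        then show ?thesis by simp
      qed
      then show ?thesis using b True bound_row_r le by simp
    qed
  qed
  then show "f \<in> weak_fill n A t'" using f unfolding weak_fill_def by auto
next
  fix f assume f: "f \<in> weak_fill n A t'"
  have "f (r', c) \<in> {0 .. t (n - r') - int r'}" if x: "(r', c) \<in> shape n A" for r' c
  proof -
    have "f (r', c) \<in> {0 .. t' (n - r') - int r'}" using f x unfolding weak_fill_def by auto
    then show ?thesis using bound_other_rows[of r'] bound_row_r x
      by (cases "r' = r") (auto simp: shape_mem)
  qed
  moreover have "\<not> at_max f"
  proof
    assume "at_max f"
    then have "1 \<le> L" "f (r, nat L) = max_entry" unfolding at_max_def by auto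
    moreover have "f (r, nat L) \<le> t' (n - r) - int r"
      using f corner_in_shape[OF \<open>1 \<le> L\<close>] unfolding weak_fill_def by force
    ultimately show False using bound_row_r by simp
  qed
  ultimately show "f \<in> {f \<in> weak_fill n A t. \<not> at_max f}"
    using f unfolding weak_fill_def by auto
qed

text \<open>In a blocked row the last box cannot carry \<open>max_entry\<close>: the box below it, in a row
  with the same parameter \<open>T\<close>, would need a value at least as large but is bounded by
  \<open>max_entry - 1\<close>.\<close>
lemma weak_fill_at_max_blocked: "blocked \<Longrightarrow> {f \<in> weak_fill n A t. at_max f} = {}"
proof (rule ccontr)
  assume "blocked" "{f \<in> weak_fill n A t. at_max f} \<noteq> {}"
  then obtain f where f: "f \<in> weak_fill n A t" "1 \<le> L" "f (r, nat L) = max_entry"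
    unfolding at_max_def by auto
  note below = blocked_box_below[OF \<open>blocked\<close> f(2)]
  have "f (r, nat L) \<le> f (Suc r, nat L)"
    using f(1) below(3) corner_in_shape[OF f(2)] unfolding weak_fill_def by blast
  moreover have "f (Suc r, nat L) \<le> t (n - Suc r) - int (Suc r)"
    using f(1) below(3) unfolding weak_fill_def by force
  ultimately show False using f(3) below t_top[of "i - 1"] unfolding max_entry_def by simp
qed

lemma weak_fill_at_max_restrict:
  assumes nb: "\<not> blocked" and f: "f \<in> weak_fill n A t"
  shows "f((r, nat L) := 0) \<in> weak_fill n A' t"
proof -
  let ?h = "f((r, nat L) := 0)"
  note shape' = unblocked_shape[OF nb]
  have hv: "\<And>x. x \<in> shape n A' \<Longrightarrow> ?h x = f x" using shape' by auto
  have "\<forall>x\<in>shape n A'. ?h x \<in> {0 .. t (n - fst x) - int (fst x)}"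
    using f hv shape' unfolding weak_fill_def by auto
  moreover have "\<forall>x. x \<notin> shape n A' \<longrightarrow> ?h x = 0"
    using f shape' unfolding weak_fill_def by auto
  moreover have "\<forall>r c c'. (r,c) \<in> shape n A' \<and> (r,c') \<in> shape n A' \<and> c < c' \<longrightarrow> ?h (r,c) \<le> ?h (r,c')"
    using f hv shape' unfolding weak_fill_def by auto
  moreover have "\<forall>r r' c. (r,c) \<in> shape n A' \<and> (r',c) \<in> shape n A' \<and> r < r' \<longrightarrow> ?h (r,c) \<le> ?h (r',c)"
    using f hv shape' unfolding weak_fill_def by auto
  ultimately show ?thesis unfolding weak_fill_def by blast
qed

text \<open>Above the removed box, the entries of a filling of the smaller diagram are at most
  \<open>max_entry\<close>: the row just above has parameter \<open>T - 1\<close> and columns increase downwards.\<close>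
lemma weak_fill_column_above_bounded:
  assumes nb: "\<not> blocked" and g: "g \<in> weak_fill n A' t" and a: "1 \<le> r1" "r1 < r"
  shows "(r1, nat L) \<in> shape n A' \<and> g (r1, nat L) \<le> max_entry"
proof -
  note shape' = unblocked_shape[OF nb] and L1 = unblocked_L_pos[OF nb]
  have pin: "(r, nat L) \<in> shape n A" using corner_in_shape L1 by simp
  have rm: "(r - 1, nat L) \<in> shape n A'"
    using shape_closed_upwards[OF incr pin, of "r-1"] shape' a L1 by auto
  have "n - (r - 1) = Suc i" "Suc i < n" using a r_bounds unfolding r_def by auto
  moreover have "g (r - 1, nat L) \<le> t (n - (r - 1)) - int (r - 1)"
    using g rm unfolding weak_fill_def by force
  ultimately have "g (r - 1, nat L) \<le> max_entry"
    using t_after a unfolding max_entry_def by (simp add: of_nat_diff)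
  moreover have r1in: "(r1, nat L) \<in> shape n A'"
    using shape_closed_upwards[OF incr pin, of r1] a L1 shape' by auto
  moreover have "g (r1, nat L) \<le> g (r - 1, nat L)"
  proof -
    have "r1 < r - 1 \<or> r1 = r - 1" using a by linarith
    then show ?thesis using g r1in rm unfolding weak_fill_def by auto
  qed
  ultimately show ?thesis by simp
qed

text \<open>Conversely, \<open>max_entry\<close> may be put into the removed box of any filling of the smaller
  diagram: entries to its left are bounded by \<open>max_entry\<close> (same row), and so are those above
  it, since the row just above has parameter \<open>T - 1\<close>.\<close>
lemma weak_fill_at_max_extend:
  assumes nb: "\<not> blocked" and g: "g \<in> weak_fill n A' t"
  shows "g((r, nat L) := max_entry) \<in> weak_fill n A t" "at_max (g((r, nat L) := max_entry))"
proof -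
  let ?p = "(r, nat L)" and ?h = "g((r, nat L) := max_entry)"
  note shape' = unblocked_shape[OF nb] and L1 = unblocked_L_pos[OF nb]
  have pin: "?p \<in> shape n A" using corner_in_shape L1 by simp
  have gY: "\<And>x. x \<in> shape n A \<Longrightarrow> x \<noteq> ?p \<Longrightarrow> x \<in> shape n A'" using shape' by auto
  have gb: "\<And>r' c. (r', c) \<in> shape n A' \<Longrightarrow> g (r', c) \<in> {0 .. t (n - r') - int r'}"
    using g unfolding weak_fill_def by force
  note above = weak_fill_column_above_bounded[OF nb g]
  have max_nonneg: "0 \<le> max_entry"
  proof (cases "r = 1")
    case True
    then show ?thesis using T_pos unfolding max_entry_def by simp
  next
    case False
    then show ?thesis using above[of "r - 1"] r_bounds gb by force
  qed
  have "\<forall>x. x \<notin> shape n A \<longrightarrow> ?h x = 0"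
    using g pin shape' unfolding weak_fill_def by auto
  moreover have "\<forall>x\<in>shape n A. ?h x \<in> {0 .. t (n - fst x) - int (fst x)}"
  proof
    fix x assume x: "x \<in> shape n A"
    show "?h x \<in> {0 .. t (n - fst x) - int (fst x)}"
    proof (cases "x = ?p")
      case True
      then show ?thesis using max_nonneg bound_row_r by simp
    next
      case False
      then show ?thesis using gb[of "fst x" "snd x"] gY[OF x False] by simp
    qed
  qed
  moreover have "?h (r1, c) \<le> ?h (r1, c')"
    if a: "(r1, c) \<in> shape n A" "(r1, c') \<in> shape n A" "c < c'" for r1 c c'
  proof (cases "(r1, c') = ?p")
    case True
    then have "(r1, c) \<in> shape n A'" using gY a by auto
    then show ?thesis using gb[of r1 c] bound_row_r True a by auto
  next
    case False
    then have "(r1, c) \<noteq> ?p" using corner_last_in_row[OF a(2,3)] by blast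
    then show ?thesis using g gY a False unfolding weak_fill_def by auto
  qed
  moreover have "?h (r1, c) \<le> ?h (r2, c)"
    if a: "(r1, c) \<in> shape n A" "(r2, c) \<in> shape n A" "r1 < r2" for r1 r2 c
  proof (cases "(r2, c) = ?p")
    case True
    have "1 \<le> r1" using a by (auto simp: shape_mem)
    then show ?thesis using above[of r1] True a by auto
  next
    case False
    then have "(r1, c) \<noteq> ?p" using unblocked_corner_nothing_below[OF nb a(2,3)] by blast
    then show ?thesis using g gY a False unfolding weak_fill_def by auto
  qed
  ultimately show "?h \<in> weak_fill n A t" unfolding weak_fill_def by blast
  show "at_max ?h" using L1 unfolding at_max_def by simp
qed

lemma card_weak_fill_at_max:
  assumes nb: "\<not> blocked"
  shows "card {f \<in> weak_fill n A t. at_max f} = card (weak_fill n A' t)"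
proof (rule bij_betw_same_card[of "\<lambda>f. f((r, nat L) := 0)"],
    rule bij_betw_byWitness[where f'="\<lambda>g. g((r, nat L) := max_entry)"])
  show "\<forall>f\<in>{f \<in> weak_fill n A t. at_max f}. f((r, nat L) := 0, (r, nat L) := max_entry) = f"
    unfolding at_max_def by auto
  show "\<forall>g\<in>weak_fill n A' t. g((r, nat L) := max_entry, (r, nat L) := 0) = g"
    using unblocked_shape[OF nb] unfolding weak_fill_def by auto
qed (use weak_fill_at_max_restrict[OF nb] weak_fill_at_max_extend[OF nb] in auto)

lemma card_weak_fill_split:
  "card (weak_fill n A t) =
     card (weak_fill n A t') + (if blocked then 0 else card (weak_fill n A' t))"
proof -
  have "weak_fill n A t = {f \<in> weak_fill n A t. \<not> at_max f} \<union> {f \<in> weak_fill n A t. at_max f}"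
    by auto
  then have "card (weak_fill n A t) =
      card {f \<in> weak_fill n A t. \<not> at_max f} + card {f \<in> weak_fill n A t. at_max f}"
    by (metis (no_types, lifting) card_Un_disjoint disjoint_iff finite_Un finite_weak_fill mem_Collect_eq)
  then show ?thesis
    using weak_fill_not_at_max weak_fill_at_max_blocked card_weak_fill_at_max
    by (cases blocked) simp_all
qed

end

text \<open>When all upper parameters vanish the matrix is unitriangular for the empty diagram and
  has a zero last row otherwise, while no box can be filled with a value in \<open>{0..-1}\<close>.\<close>
lemma multichoose_det_zero_params:
  assumes incr: "incr_seq n A" and n: "0 < n" and t0: "\<And>j. j < n \<Longrightarrow> t j = 0"
  shows "multichoose_det n A t = int (card (weak_fill n A t))"
proof (cases "A (n-1) = int n")
  case True
  have "multichoose_det n A t = detf n (\<lambda>i j. if i = j then 1 else 0)"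
    unfolding multichoose_det_def
  proof (rule detf_cong)
    fix a j assume "a < n" "j < n"
    then show "gbin (t a + (A a - int (j + 1)) - 1) (A a - int (j + 1)) = (if a = j then 1 else 0)"
      using gbin_pred_diag[of "A a - int (j+1)"] by (simp add: t0 incr_seq_minimal[OF incr n True])
  qed
  then show ?thesis by (simp add: detf_id weak_fill_empty_shape shape_empty_minimal[OF incr n True])
next
  case False
  then have big: "A (n-1) > int n" using incr_seq_lower[OF incr, of "n-1"] n by simp
  have "multichoose_det n A t = 0" unfolding multichoose_det_def
  proof (rule detf_zero_row[of "n-1"])
    fix j assume "j < n"
    then show "gbin (t (n-1) + (A (n-1) - int (j + 1)) - 1) (A (n-1) - int (j + 1)) = 0"
      using gbin_pred_diag[of "A (n-1) - int (j+1)"] t0[of "n-1"] n big by simp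
  qed (use n in simp)
  moreover have "weak_fill n A t = {}"
  proof (rule ccontr)
    assume "weak_fill n A t \<noteq> {}"
    then obtain f where "f \<in> weak_fill n A t" by auto
    then have "f (1,1) \<in> {0 .. t (n - 1) - 1}"
      using top_left_box_in_shape[of n A, OF n big] unfolding weak_fill_def by force
    then show False using t0[of "n-1"] n by simp
  qed
  ultimately show ?thesis by simp
qed

lemma last_max_index:
  assumes st: "unit_steps_down n t" and n: "0 < n" and T: "t 0 = T"
  defines "i \<equiv> LEAST j. n \<le> Suc j \<or> t (Suc j) \<noteq> T"
  shows "i < n" "\<And>j. j \<le> i \<Longrightarrow> t j = T" "Suc i < n \<Longrightarrow> t (Suc i) = T - 1"
proof -
  have ex: "n \<le> Suc (n-1) \<or> t (Suc (n-1)) \<noteq> T" by arith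
  have "i \<le> n - 1" unfolding i_def by (rule Least_le) (rule ex)
  then show "i < n" using n by simp
  show block: "t j = T" if "j \<le> i" for j
    using that
  proof (induction j)
    case (Suc j)
    then have "\<not> (n \<le> Suc j \<or> t (Suc j) \<noteq> T)" unfolding i_def by (intro not_less_Least) simp
    then show ?case by simp
  qed (use T in simp)
  assume si: "Suc i < n"
  have "n \<le> Suc i \<or> t (Suc i) \<noteq> T" unfolding i_def by (rule LeastI[of _ "n-1"]) (rule ex)
  moreover have "t (Suc i) = t i \<or> t (Suc i) = t i - 1" using st si unfolding unit_steps_down_def by blast
  ultimately show "t (Suc i) = T - 1" using block[of i] si by auto
qed

text \<open>Main result for weak fillings, by induction on the sum of the upper parameters and the
  sequence \<open>A\<close> (the second recursive call keeps \<open>t\<close> but lowers \<open>A\<close>).\<close>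
theorem multichoose_det_eq_card_weak_fill:
  assumes "incr_seq n A" "unit_steps_down n t"
  shows "multichoose_det n A t = int (card (weak_fill n A t))"
  using assms
proof (induction "\<Sum>i<n. nat (t i) + nat (A i)" arbitrary: A t rule: less_induct)
  case less
  note incr = less.prems(1) and st = less.prems(2)
  show ?case
  proof (cases "n = 0")
    case True
    then show ?thesis by (simp add: multichoose_det_def detf_0 weak_fill_empty_shape shape_def)
  next
    case False
    then have n: "0 < n" by simp
    define T where "T = t 0"
    have t_nonneg: "\<And>j. j < n \<Longrightarrow> 0 \<le> t j" using st unfolding unit_steps_down_def by auto
    show ?thesis
    proof (cases "T = 0")
      case True
      have "t j = 0" if "j < n" for j
        using unit_steps_down_mono[OF st, of 0 j] t_nonneg[OF that] True that unfolding T_def by simp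
      then show ?thesis by (rule multichoose_det_zero_params[OF incr n])
    next
      case False
      then have T1: "1 \<le> T" using t_nonneg[of 0] n unfolding T_def by simp
      define i where "i = (LEAST j. n \<le> Suc j \<or> t (Suc j) \<noteq> T)"
      note i = last_max_index[OF st n T_def[symmetric], folded i_def]
      interpret weak_corner n i A t T
        by unfold_locales (use incr i T1 in auto)
      have IH1: "multichoose_det n A t' = int (card (weak_fill n A t'))"
        by (rule less.hyps[OF params_decrease_lowered incr unit_steps_down_lowered[OF st]])
      show ?thesis
      proof (cases blocked)
        case True
        then show ?thesis
          using multichoose_det_split multichoose_det_blocked card_weak_fill_split IH1 by simp
      next
        case False
        have IH2: "multichoose_det n A' t = int (card (weak_fill n A' t))"
          by (rule less.hyps[OF params_decrease_shortened unblocked_incr_seq[OF False] st])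
        then show ?thesis using multichoose_det_split card_weak_fill_split IH1 False by simp
      qed
    qed
  qed
qed

section \<open>Matchings and their openers\<close>

definition openers :: "(nat \<times> nat) set \<Rightarrow> nat list" where
  "openers M = sorted_list_of_set (fst ` M)"

text \<open>The matching \<open>\<rho>\<close> left over after removing \<open>s\<close> surrounding arcs, shifted back by \<open>s\<close>.\<close>
definition strip :: "nat \<Rightarrow> (nat \<times> nat) set \<Rightarrow> (nat \<times> nat) set" where
  "strip s M = (\<lambda>(u,v). (u - s, v - s)) ` {e \<in> M. s < fst e}"

context
  fixes n :: nat and M :: "(nat \<times> nat) set"
  assumes mt: "is_matching n M"
begin

lemma arc_bounds: "e \<in> M \<Longrightarrow> 1 \<le> fst e \<and> fst e < snd e \<and> snd e \<le> 2*n"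
  using mt unfolding is_matching_def by auto

lemma finite_matching: "finite M"
proof -
  have "M \<subseteq> {1..2*n} \<times> {1..2*n}"
  proof
    fix e assume "e \<in> M"
    then show "e \<in> {1..2*n} \<times> {1..2*n}" using arc_bounds[of e] by (cases e) auto
  qed
  then show ?thesis by (rule finite_subset) auto
qed

lemma card_arcs_at: "x \<in> {1..2*n} \<Longrightarrow> card {e\<in>M. fst e = x \<or> snd e = x} = 1"
  using mt unfolding is_matching_def by auto

lemma noncrossing: assumes "(a,b) \<in> M" "(c,d) \<in> M" shows "\<not> (a < c \<and> c < b \<and> b < d)"
proof -
  have H: "\<forall>(a,b)\<in>M. \<forall>(c,d)\<in>M. \<not> (a < c \<and> c < b \<and> b < d)"
    using mt unfolding is_matching_def by (elim conjE)
  have "\<forall>(c,d)\<in>M. \<not> (a < c \<and> c < b \<and> b < d)" using bspec[OF H assms(1)] by simp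
  from bspec[OF this assms(2)] show ?thesis by simp
qed

lemma arc_unique:
  assumes "e \<in> M" "e' \<in> M" "z = fst e \<or> z = snd e" "z = fst e' \<or> z = snd e'"
  shows "e = e'"
proof -
  have z: "z \<in> {1..2*n}" using arc_bounds[OF assms(1)] assms(3) by auto
  obtain w where w: "{e\<in>M. fst e = z \<or> snd e = z} = {w}" using card_arcs_at[OF z] by (rule card_1_singletonE)
  have "e \<in> {e\<in>M. fst e = z \<or> snd e = z}" using assms(1,3) by auto
  then have 1: "e = w" using w by simp
  have "e' \<in> {e\<in>M. fst e = z \<or> snd e = z}" using assms(2,4) by auto
  then have 2: "e' = w" using w by simp
  show ?thesis using 1 2 by simp
qed

lemma openers_closers_cover: "x \<in> {1..2*n} \<Longrightarrow> x \<in> fst ` M \<or> x \<in> snd ` M"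
proof -
  assume x: "x \<in> {1..2*n}"
  obtain w where w: "{e\<in>M. fst e = x \<or> snd e = x} = {w}" using card_arcs_at[OF x] by (rule card_1_singletonE)
  then have wM: "w \<in> M" and wx: "fst w = x \<or> snd w = x" by auto
  show ?thesis
  proof (cases "fst w = x")
    case True
    then have "x \<in> fst ` M" using wM by (intro image_eqI[of _ fst w]) auto
    then show ?thesis by simp
  next
    case False
    then have "snd w = x" using wx by simp
    then have "x \<in> snd ` M" using wM by (intro image_eqI[of _ snd w]) auto
    then show ?thesis by simp
  qed
qed

lemma openers_closers_disjoint: "fst ` M \<inter> snd ` M = {}"
proof (rule ccontr)
  assume "fst ` M \<inter> snd ` M \<noteq> {}"
  then obtain x where "x \<in> fst ` M" "x \<in> snd ` M" by blast
  then obtain e e' where e: "e \<in> M" "e' \<in> M" "fst e = snd e'" by blast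
  then have "e = e'" using arc_unique[of e e' "fst e"] by simp
  then show False using e arc_bounds[OF e(1)] by simp
qed

lemma inj_on_fst_arcs: "inj_on fst M"
proof (rule inj_onI)
  fix e e' assume "e \<in> M" "e' \<in> M" "fst e = fst e'"
  then show "e = e'" using arc_unique[of e e' "fst e"] by simp
qed

lemma inj_on_snd_arcs: "inj_on snd M"
proof (rule inj_onI)
  fix e e' assume "e \<in> M" "e' \<in> M" "snd e = snd e'"
  then show "e = e'" using arc_unique[of e e' "snd e"] by simp
qed

lemma card_openers_set: "card (fst ` M) = n"
proof -
  have un: "fst ` M \<union> snd ` M = {1..2*n}"
  proof
    show "fst ` M \<union> snd ` M \<subseteq> {1..2*n}"
    proof
      fix x assume "x \<in> fst ` M \<union> snd ` M"
      then obtain e where "e \<in> M" "x = fst e \<or> x = snd e" by blast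
      then show "x \<in> {1..2*n}" using arc_bounds[of e] by auto
    qed
    show "{1..2*n} \<subseteq> fst ` M \<union> snd ` M" using openers_closers_cover by blast
  qed
  have fin: "finite (fst ` M)" "finite (snd ` M)" using finite_matching by auto
  have "card (fst ` M) + card (snd ` M) = 2 * n"
    using card_Un_disjoint[OF fin openers_closers_disjoint] un by simp
  moreover have "card (fst ` M) = card M" "card (snd ` M) = card M"
    using card_image[OF inj_on_fst_arcs] card_image[OF inj_on_snd_arcs] by auto
  ultimately show ?thesis by simp
qed

lemma length_openers: "length (openers M) = n" unfolding openers_def using card_openers_set finite_matching by simp
lemma set_openers: "set (openers M) = fst ` M" unfolding openers_def using finite_matching by simp
lemma sorted_openers: "sorted_wrt (<) (openers M)" unfolding openers_def by (rule strict_sorted_list_of_set)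
lemma distinct_openers: "distinct (openers M)" using sorted_openers by (simp add: strict_sorted_iff)

lemma openers_strict_mono: "i < j \<Longrightarrow> j < n \<Longrightarrow> openers M ! i < openers M ! j"
  using sorted_wrt_nth_less[OF sorted_openers] length_openers by simp

lemma openers_in: "k < n \<Longrightarrow> openers M ! k \<in> fst ` M"
  using nth_mem[of k "openers M"] set_openers length_openers by simp

lemma openers_pos: "k < n \<Longrightarrow> 1 \<le> openers M ! k"
  using openers_in arc_bounds by force

lemma incr_seq_openers: "incr_seq n (\<lambda>i. int (openers M ! i))"
  unfolding incr_seq_def using openers_strict_mono openers_pos by auto

lemma card_openers_below: assumes k: "k < n" shows "card {y \<in> fst ` M. y < openers M ! k} = k"
proof -
  have "{y \<in> fst ` M. y < openers M ! k} = (\<lambda>j. openers M ! j) ` {..<k}"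
  proof
    show "(\<lambda>j. openers M ! j) ` {..<k} \<subseteq> {y \<in> fst ` M. y < openers M ! k}"
    proof
      fix y assume "y \<in> (\<lambda>j. openers M ! j) ` {..<k}"
      then obtain j where j: "j < k" "y = openers M ! j" by blast
      then show "y \<in> {y \<in> fst ` M. y < openers M ! k}" using openers_strict_mono[of j k] openers_in[of j] k by simp
    qed
    show "{y \<in> fst ` M. y < openers M ! k} \<subseteq> (\<lambda>j. openers M ! j) ` {..<k}"
    proof
      fix y assume y: "y \<in> {y \<in> fst ` M. y < openers M ! k}"
      then have "y \<in> set (openers M)" using set_openers by simp
      then obtain j where j0: "j < length (openers M)" "openers M ! j = y" unfolding in_set_conv_nth by blast
      then have j: "j < n" "openers M ! j = y" using length_openers by auto
      have "j < k"
      proof (rule ccontr)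
        assume "\<not> j < k"
        then have "k \<le> j" by simp
        then have "openers M ! k \<le> openers M ! j"
        proof (cases "j = k")
          case False then show ?thesis using openers_strict_mono[of k j] j \<open>k \<le> j\<close> by simp
        qed simp
        then show False using y j by simp
      qed
      then show "y \<in> (\<lambda>j. openers M ! j) ` {..<k}" using j by (intro image_eqI[of _ _ j]) auto
    qed
  qed
  moreover have "inj_on (\<lambda>j. openers M ! j) {..<k}"
  proof (rule inj_onI)
    fix a b assume "a \<in> {..<k}" "b \<in> {..<k}" "openers M ! a = openers M ! b"
    then show "a = b" using nth_eq_iff_index_eq[OF distinct_openers, of a b] length_openers k by simp
  qed
  ultimately show ?thesis using card_image by fastforce
qed

text \<open>Before \<open>a_k\<close> there are \<open>k\<close> openers and at most \<open>k\<close> closers, so \<open>a_k \<le> 2k + 1\<close>;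
  equivalently \<open>Y(\<pi>)\<close> fits into the staircase diagram.\<close>
lemma opener_upper_bound: assumes k: "k < n" shows "openers M ! k \<le> 2 * k + 1"
proof -
  define z where "z = openers M ! k"
  obtain e where e: "e \<in> M" "z = fst e" using openers_in[OF k] unfolding z_def by blast
  have z2: "z \<le> 2 * n" using arc_bounds[OF e(1)] e(2) by simp
  have sub: "{1..<z} \<subseteq> {y \<in> fst ` M. y < z} \<union> {y \<in> snd ` M. y < z}"
  proof
    fix y assume y: "y \<in> {1..<z}"
    then have "y \<in> {1..2*n}" using z2 by simp
    then have "y \<in> fst ` M \<or> y \<in> snd ` M" by (rule openers_closers_cover)
    then show "y \<in> {y \<in> fst ` M. y < z} \<union> {y \<in> snd ` M. y < z}" using y by auto
  qed
  have "{y \<in> snd ` M. y < z} = snd ` {e\<in>M. snd e < z}" by auto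
  moreover have "card (snd ` {e\<in>M. snd e < z}) \<le> card {e\<in>M. snd e < z}"
    by (rule card_image_le) (simp add: finite_matching)
  ultimately have "card {y \<in> snd ` M. y < z} \<le> card {e\<in>M. snd e < z}" by simp
  also have "\<dots> \<le> card {e\<in>M. fst e < z}"
  proof (rule card_mono)
    show "finite {e\<in>M. fst e < z}" using finite_matching by simp
    show "{e\<in>M. snd e < z} \<subseteq> {e\<in>M. fst e < z}"
    proof
      fix e assume "e \<in> {e\<in>M. snd e < z}"
      then show "e \<in> {e\<in>M. fst e < z}" using arc_bounds[of e] by auto
    qed
  qed
  also have "\<dots> = card (fst ` {e\<in>M. fst e < z})"
    by (rule card_image[symmetric]) (rule inj_on_subset[OF inj_on_fst_arcs], auto)
  also have "fst ` {e\<in>M. fst e < z} = {y \<in> fst ` M. y < z}" by auto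
  finally have c: "card {y \<in> snd ` M. y < z} \<le> k" using card_openers_below[OF k] unfolding z_def by simp
  have "card {1..<z} \<le> card ({y \<in> fst ` M. y < z} \<union> {y \<in> snd ` M. y < z})"
    by (rule card_mono) (use finite_matching sub in auto)
  also have "\<dots> \<le> card {y \<in> fst ` M. y < z} + card {y \<in> snd ` M. y < z}" by (rule card_Un_le)
  finally have "card {1..<z} \<le> card {y \<in> fst ` M. y < z} + card {y \<in> snd ` M. y < z}" .
  moreover have "card {y \<in> fst ` M. y < z} = k" using card_openers_below[OF k] unfolding z_def .
  moreover have "card {1..<z} = z - 1" by simp
  ultimately have "z - 1 \<le> 2 * k" using c by linarith
  then show ?thesis unfolding z_def by simp
qed

text \<open>An arc \<open>(x,y)\<close> encloses the same arcs whether counted by openers or by closers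
  (noncrossing).\<close>
lemma nested_arcs:
  assumes xy: "(x,y) \<in> M"
  shows "{e\<in>M. x < fst e \<and> fst e < y} = {e\<in>M. x < snd e \<and> snd e < y}"
proof (rule Set.set_eqI)
  fix e :: "nat \<times> nat"
  obtain u v where e: "e = (u, v)" by (cases e)
  show "e \<in> {e\<in>M. x < fst e \<and> fst e < y} \<longleftrightarrow> e \<in> {e\<in>M. x < snd e \<and> snd e < y}"
  proof
    assume a: "e \<in> {e\<in>M. x < fst e \<and> fst e < y}"
    then have uv: "(u,v) \<in> M" "x < u" "u < y" using e by auto
    have "u < v" using arc_bounds[OF uv(1)] by simp
    have "v \<noteq> y"
    proof
      assume "v = y"
      then have "(u,v) = (x,y)" using arc_unique[OF uv(1) xy, of y] by simp
      then show False using uv by simp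
    qed
    moreover have "\<not> y < v" using noncrossing[OF xy uv(1)] uv by auto
    ultimately show "e \<in> {e\<in>M. x < snd e \<and> snd e < y}" using uv \<open>u < v\<close> e by auto
  next
    assume a: "e \<in> {e\<in>M. x < snd e \<and> snd e < y}"
    then have uv: "(u,v) \<in> M" "x < v" "v < y" using e by auto
    have "u < v" using arc_bounds[OF uv(1)] by simp
    have "u \<noteq> x"
    proof
      assume "u = x"
      then have "(u,v) = (x,y)" using arc_unique[OF uv(1) xy, of x] by simp
      then show False using uv by simp
    qed
    moreover have "\<not> u < x" using noncrossing[OF uv(1) xy] uv by auto
    ultimately show "e \<in> {e\<in>M. x < fst e \<and> fst e < y}" using uv e \<open>u < v\<close> by auto
  qed
qed

text \<open>Hence the inside of an arc is filled by nested arcs: \<open>y - x - 1\<close> is twice their number.\<close>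
lemma arc_span:
  assumes xy: "(x,y) \<in> M"
  shows "y - x - 1 = 2 * card (fst ` M \<inter> {x<..<y})"
proof -
  define E where "E = {e\<in>M. x < fst e \<and> fst e < y}"
  have fE: "finite E" using finite_matching unfolding E_def by simp
  have O: "fst ` M \<inter> {x<..<y} = fst ` E" unfolding E_def by auto
  have C: "snd ` M \<inter> {x<..<y} = snd ` E" unfolding nested_arcs[OF xy] E_def by auto
  have c1: "card (fst ` E) = card E"
    by (rule card_image) (rule inj_on_subset[OF inj_on_fst_arcs], auto simp: E_def)
  have c2: "card (snd ` E) = card E"
    by (rule card_image) (rule inj_on_subset[OF inj_on_snd_arcs], auto simp: E_def)
  have xy2: "1 \<le> x" "y \<le> 2*n" using arc_bounds[OF xy] by auto
  have un: "{x<..<y} = (fst ` M \<inter> {x<..<y}) \<union> (snd ` M \<inter> {x<..<y})"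
  proof
    show "{x<..<y} \<subseteq> (fst ` M \<inter> {x<..<y}) \<union> (snd ` M \<inter> {x<..<y})"
    proof
      fix w assume w: "w \<in> {x<..<y}"
      then have "w \<in> {1..2*n}" using xy2 by simp
      then have "w \<in> fst ` M \<or> w \<in> snd ` M" by (rule openers_closers_cover)
      then show "w \<in> (fst ` M \<inter> {x<..<y}) \<union> (snd ` M \<inter> {x<..<y})" using w by blast
    qed
  qed blast
  have dj: "(fst ` M \<inter> {x<..<y}) \<inter> (snd ` M \<inter> {x<..<y}) = {}" using openers_closers_disjoint by blast
  have "card {x<..<y} = card (fst ` M \<inter> {x<..<y}) + card (snd ` M \<inter> {x<..<y})"
    by (subst un, rule card_Un_disjoint) (use dj in auto)
  then show ?thesis unfolding O C c1 c2 by simp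
qed

lemma opener_lower_bound: "k < n \<Longrightarrow> int (openers M ! k) \<ge> int k + 1"
  using incr_seq_lower[OF incr_seq_openers] by simp

lemma card_openers_before_closer:
  assumes xy: "(x,y) \<in> M" and init: "{1..x} \<subseteq> fst ` M"
  shows "card {w \<in> fst ` M. w < y} = x + card (fst ` M \<inter> {x<..<y})"
proof -
  let ?O = "fst ` M"
  have x1: "x < y" using arc_bounds[OF xy] by auto
  have eq: "{w \<in> ?O. w < y} = {1..x} \<union> (?O \<inter> {x<..<y})"
  proof
    show "{w \<in> ?O. w < y} \<subseteq> {1..x} \<union> (?O \<inter> {x<..<y})"
    proof
      fix w assume w: "w \<in> {w \<in> ?O. w < y}"
      then have "1 \<le> w" using arc_bounds by force
      then show "w \<in> {1..x} \<union> (?O \<inter> {x<..<y})" using w by auto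
    qed
    show "{1..x} \<union> (?O \<inter> {x<..<y}) \<subseteq> {w \<in> ?O. w < y}"
      using init x1 by auto
  qed
  show ?thesis unfolding eq by (subst card_Un_disjoint) (use finite_matching in auto)
qed

lemma strip_mem: "(a,b) \<in> strip s M \<longleftrightarrow> (a + s, b + s) \<in> M \<and> 0 < a"
proof
  assume "(a,b) \<in> strip s M"
  then obtain u v where uv: "(u,v) \<in> M" "s < u" "(a,b) = (u - s, v - s)"
    unfolding strip_def by auto
  have "u < v" using arc_bounds[OF uv(1)] by simp
  then show "(a + s, b + s) \<in> M \<and> 0 < a" using uv by auto
next
  assume "(a + s, b + s) \<in> M \<and> 0 < a"
  then show "(a,b) \<in> strip s M" unfolding strip_def
    by (intro image_eqI[of _ _ "(a + s, b + s)"]) auto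
qed

text \<open>From now on the openers \<open>a_k\<close> with \<open>k \<ge> s\<close> (0-based) are assumed as small as they
  are in a matching of the form \<open>(\<rho>)_s\<close>; we show that \<open>M\<close> then has this form.\<close>
context
  fixes s :: nat
  assumes s: "1 \<le> s" "s < n"
    and small: "\<And>k. s \<le> k \<Longrightarrow> k < n \<Longrightarrow> openers M ! k \<le> 2 * k + 1 - s"
begin

text \<open>Since \<open>a_s \<le> s + 1\<close>, the first \<open>s + 1\<close> openers are \<open>1, \<dots>, s + 1\<close>.\<close>
lemma initial_openers: "1 \<le> x \<Longrightarrow> x \<le> Suc s \<Longrightarrow> x \<in> fst ` M"
proof -
  have first: "openers M ! k = Suc k" if k: "k \<le> s" for k
  proof -
    have "int (openers M ! s) - int (openers M ! k) \<ge> int (s - k)"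
      using incr_seq_gap[OF incr_seq_openers k] s by simp
    then show ?thesis using small[of s] opener_lower_bound[of k] k s by simp
  qed
  assume "1 \<le> x" "x \<le> Suc s"
  then have "openers M ! (x - 1) = x" "x - 1 < n" using first[of "x-1"] s by auto
  then show "x \<in> fst ` M" using openers_in by metis
qed

text \<open>Each arc opened at \<open>x \<le> s\<close> closes at \<open>2n + 1 - x\<close>: it contains \<open>q\<close> nested arcs and
  \<open>x + q\<close> openers precede its closer; if \<open>x + q < n\<close>, the next opener \<open>a_{x+q}\<close> lies beyond the
  closer \<open>x + 2q + 1\<close>, contradicting the smallness assumption.\<close>
lemma outer_arc: "e \<in> M \<Longrightarrow> fst e \<le> s \<Longrightarrow> snd e = 2*n + 1 - fst e"
proof -
  let ?O = "fst ` M"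
  assume eM: "e \<in> M" and es: "fst e \<le> s"
  obtain x y where e: "e = (x, y)" by (cases e)
  have xy: "(x,y) \<in> M" "x \<le> s" using eM es e by auto
  have x1: "1 \<le> x" "x < y" using arc_bounds[OF xy(1)] by auto
  have yO: "y \<notin> ?O" using openers_closers_disjoint xy(1) by force
  have ys: "Suc s < y"
  proof (rule ccontr)
    assume "\<not> Suc s < y"
    then have "y \<in> ?O" using initial_openers[of y] x1 by simp
    then show False using yO by simp
  qed
  define q where "q = card (?O \<inter> {x<..<y})"
  have yq: "y = x + 2 * q + 1" using arc_span[OF xy(1)] x1 unfolding q_def by simp
  have finO: "finite ?O" using finite_matching by simp
  have cOy: "card {w \<in> ?O. w < y} = x + q"
    unfolding q_def by (rule card_openers_before_closer[OF xy(1)]) (use initial_openers xy(2) in auto)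
  have "card {w \<in> ?O. w < y} \<le> card ?O" by (rule card_mono[OF finO]) auto
  then have le: "x + q \<le> n" using cOy card_openers_set by simp
  have "{Suc x..Suc s} \<subseteq> ?O \<inter> {x<..<y}" using initial_openers ys by auto
  then have "card {Suc x..Suc s} \<le> q" unfolding q_def by (intro card_mono) (use finO in auto)
  then have qs: "Suc s - x \<le> q" by simp
  have "x + q = n"
  proof (rule ccontr)
    assume "x + q \<noteq> n"
    then have K: "x + q < n" using le by simp
    define z where "z = openers M ! (x + q)"
    have zi: "card {w \<in> ?O. w < z} = x + q" using card_openers_below[OF K] unfolding z_def .
    have zO: "z \<in> ?O" using openers_in[OF K] unfolding z_def .
    have "y < z"
    proof (rule ccontr)
      assume "\<not> y < z"
      then have "z < y" using zO yO by (cases "z = y") auto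
      then have "{w \<in> ?O. w < z} \<subseteq> {w \<in> ?O. w < y} - {z}" by auto
      then have "card {w \<in> ?O. w < z} \<le> card ({w \<in> ?O. w < y} - {z})"
        by (intro card_mono) (use finO in auto)
      also have "\<dots> = card {w \<in> ?O. w < y} - 1" using zO \<open>z < y\<close> finO by simp
      finally show False using zi cOy K x1 by simp
    qed
    moreover have "z \<le> 2 * (x + q) + 1 - s" using small[of "x + q"] K qs unfolding z_def by simp
    ultimately show False using yq xy(2) by simp
  qed
  then show "snd e = 2 * n + 1 - fst e" using yq e x1 by simp
qed

lemma inner_arc_bound: "e \<in> M \<Longrightarrow> s < fst e \<Longrightarrow> snd e \<le> 2*n - s"
proof (rule ccontr)
  assume e: "e \<in> M" "s < fst e" "\<not> snd e \<le> 2*n - s"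
  define x where "x = 2*n + 1 - snd e"
  have se: "snd e \<le> 2*n" using arc_bounds[OF e(1)] by simp
  then have x: "1 \<le> x" "x \<le> s" using e(3) unfolding x_def by auto
  then obtain e' where e': "e' \<in> M" "fst e' = x" using initial_openers[of x] by force
  then have "snd e' = snd e" using outer_arc[of e'] x se unfolding x_def by simp
  then have "e = e'" using arc_unique[OF e(1) e'(1), of "snd e"] by simp
  then show False using e' x e(2) by simp
qed

lemma surround_strip: "M = surround s (n - s) (strip s M)"
proof
  have m2: "2*(n - s) + 2*s = 2*n" using s by simp
  show "M \<subseteq> surround s (n - s) (strip s M)"
  proof
    fix e assume e: "e \<in> M"
    obtain u v where uv: "e = (u,v)" by (cases e)
    show "e \<in> surround s (n - s) (strip s M)"
    proof (cases "u \<le> s")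
      case True
      then have "v = 2*n + 1 - u" using outer_arc[OF e] uv by simp
      moreover have "1 \<le> u" using arc_bounds[OF e] uv by simp
      ultimately show ?thesis using True uv m2 unfolding surround_def by auto
    next
      case False
      have "u < v" using arc_bounds[OF e] uv by simp
      then have "(u - s, v - s) \<in> strip s M" using strip_mem[of "u-s" "v-s"] False e uv by simp
      moreover have "e = (s + (u - s), s + (v - s))" using False uv \<open>u < v\<close> by simp
      ultimately show ?thesis unfolding surround_def by blast
    qed
  qed
  show "surround s (n - s) (strip s M) \<subseteq> M"
  proof
    fix e assume "e \<in> surround s (n - s) (strip s M)"
    then consider (outer) i where "e = (i, 2*(n - s) + 2*s + 1 - i)" "1 \<le> i" "i \<le> s"
      | (inner) i j where "e = (s + i, s + j)" "(i,j) \<in> strip s M"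
      unfolding surround_def by blast
    then show "e \<in> M"
    proof cases
      case outer
      then obtain e' where e': "e' \<in> M" "fst e' = i" using initial_openers[of i] by force
      then have "snd e' = 2*n + 1 - i" using outer_arc[of e'] outer by simp
      then have "e' = e" using e' outer m2 by (cases e') simp
      then show ?thesis using e' by simp
    next
      case inner
      then show ?thesis using strip_mem[of i j] by (simp add: add.commute)
    qed
  qed
qed

text \<open>Each point \<open>x\<close> of \<open>{1..2(n-s)}\<close> lies on exactly one arc of \<open>strip s M\<close>: the shift of
  the unique arc of \<open>M\<close> at \<open>x + s\<close>, which is not an outer arc.\<close>
lemma card_strip_arcs_at:
  assumes x: "x \<in> {1..2*(n - s)}"
  shows "card {e \<in> strip s M. fst e = x \<or> snd e = x} = 1"
proof -
  let ?sh = "\<lambda>(u::nat,v::nat). (u - s, v - s)"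
  define S where "S = {e\<in>M. fst e = x + s \<or> snd e = x + s}"
  have Sfst: "s < fst e" if e: "e \<in> S" for e
  proof (rule ccontr)
    assume "\<not> s < fst e"
    then have "snd e = 2*n + 1 - fst e" using outer_arc[of e] e unfolding S_def by simp
    moreover have "1 \<le> fst e" using arc_bounds[of e] e unfolding S_def by simp
    ultimately show False using e x s \<open>\<not> s < fst e\<close> unfolding S_def by auto
  qed
  have "{e \<in> strip s M. fst e = x \<or> snd e = x} = ?sh ` S"
  proof
    show "{e \<in> strip s M. fst e = x \<or> snd e = x} \<subseteq> ?sh ` S"
    proof
      fix e assume e: "e \<in> {e \<in> strip s M. fst e = x \<or> snd e = x}"
      obtain a b where ab: "e = (a,b)" by (cases e)
      have "(a+s, b+s) \<in> S" using strip_mem[of a b] e ab unfolding S_def by auto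
      moreover have "?sh (a+s, b+s) = e" using ab by simp
      ultimately show "e \<in> ?sh ` S" by (metis image_eqI)
    qed
    show "?sh ` S \<subseteq> {e \<in> strip s M. fst e = x \<or> snd e = x}"
    proof
      fix e assume "e \<in> ?sh ` S"
      then obtain u v where uv: "(u,v) \<in> S" "e = ?sh (u,v)" by auto
      have "s < u" using Sfst[OF uv(1)] by simp
      moreover have "(u,v) \<in> M" using uv unfolding S_def by simp
      ultimately show "e \<in> {e \<in> strip s M. fst e = x \<or> snd e = x}"
        using uv unfolding S_def strip_def by auto
    qed
  qed
  moreover have "inj_on ?sh S"
  proof (rule inj_onI)
    fix e1 e2 assume a: "e1 \<in> S" "e2 \<in> S" "?sh e1 = ?sh e2"
    have "s < fst e1" "s < fst e2" using Sfst a by auto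
    moreover have "fst e1 < snd e1" "fst e2 < snd e2" using arc_bounds a unfolding S_def by auto
    ultimately show "e1 = e2" using a(3) by (cases e1, cases e2) auto
  qed
  moreover have "card S = 1" unfolding S_def by (rule card_arcs_at) (use x s in auto)
  ultimately show ?thesis by (simp add: card_image)
qed

lemma is_matching_strip: "is_matching (n - s) (strip s M)"
  unfolding is_matching_def
proof (intro conjI)
  show "strip s M \<subseteq> {(i,j). 1 \<le> i \<and> i < j \<and> j \<le> 2*(n - s)}"
  proof
    fix e assume e: "e \<in> strip s M"
    obtain a b where ab: "e = (a,b)" by (cases e)
    have M1: "(a+s, b+s) \<in> M" "0 < a" using strip_mem e ab by auto
    have "a + s < b + s" "b + s \<le> 2*n - s"
      using arc_bounds[OF M1(1)] inner_arc_bound[OF M1(1)] M1(2) by auto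
    then show "e \<in> {(i,j). 1 \<le> i \<and> i < j \<and> j \<le> 2*(n - s)}" using ab M1(2) s by auto
  qed
  show "\<forall>(a,b)\<in>strip s M. \<forall>(c,d)\<in>strip s M. \<not> (a < c \<and> c < b \<and> b < d)"
  proof (clarify)
    fix a b c d assume e: "(a,b) \<in> strip s M" "(c,d) \<in> strip s M" "a < c" "c < b" "b < d"
    have "(a+s, b+s) \<in> M" "(c+s, d+s) \<in> M" using strip_mem e by auto
    then have "\<not> (a+s < c+s \<and> c+s < b+s \<and> b+s < d+s)" by (rule noncrossing)
    then show False using e by simp
  qed
  show "\<forall>x\<in>{1..2*(n - s)}. card {e \<in> strip s M. fst e = x \<or> snd e = x} = 1"
    using card_strip_arcs_at by blast
qed

end

end

section \<open>Reciprocity and vanishing of the binomial determinant\<close>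

lemma neg_one_power_split: "(-1::int) ^ a = (-1) ^ (a + b) * (-1) ^ b"
proof -
  have "(-1::int) ^ b * (-1) ^ b = 1" by (simp flip: power_add add: power_mult[symmetric])
  then show ?thesis by (simp add: power_add mult.assoc)
qed

text \<open>Upper negation \<open>binom(t,k) = (-1)^k binom(k-t-1,k)\<close> in every entry turns the binomial
  determinant into the multichoose determinant with negated parameters, up to a sign that
  depends only on \<open>A\<close>.\<close>
lemma binom_det_reciprocity:
  assumes A_nonneg: "\<And>i. i < n \<Longrightarrow> 0 \<le> A i"
  shows "binom_det n A t =
    (-1) ^ (\<Sum>i<n. nat (A i) + (i + 1)) * multichoose_det n A (\<lambda>i. - t i)"
proof -
  define c where "c = (\<lambda>i::nat. (-1::int) ^ nat (A i))"
  define d where "d = (\<lambda>j::nat. (-1::int) ^ (j + 1))"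
  have entry: "gbin (t i) (A i - int (j + 1)) =
      c i * d j * gbin (- t i + (A i - int (j+1)) - 1) (A i - int (j+1))" if "i < n" for i j
  proof (cases "A i - int (j + 1) < 0")
    case False
    define m where "m = nat (A i - int (j + 1))"
    have m: "A i - int (j + 1) = int m" using False unfolding m_def by simp
    have "nat (A i) = m + (j + 1)" using m A_nonneg[OF that] by simp
    then have "(-1::int) ^ m = c i * d j"
      unfolding c_def d_def using neg_one_power_split[of m "j + 1"] by simp
    then show ?thesis using gbin_negate_upper[of "t i" m] unfolding m by (simp add: algebra_simps)
  qed simp
  have "binom_det n A t = detf n (\<lambda>i j. c i * d j *
      gbin (- t i + (A i - int (j+1)) - 1) (A i - int (j+1)))"
    unfolding binom_det_def by (rule detf_cong) (rule entry)
  also have "\<dots> = (\<Prod>i<n. c i) * (\<Prod>j<n. d j) * multichoose_det n A (\<lambda>i. - t i)"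
    unfolding multichoose_det_def by (rule detf_scale)
  also have "(\<Prod>i<n. c i) * (\<Prod>j<n. d j) = (-1) ^ (\<Sum>i<n. nat (A i) + (i + 1))"
    unfolding c_def d_def by (simp only: power_sum power_add prod.distrib)
  finally show ?thesis .
qed

text \<open>If \<open>A_k > 2k + 1 + p\<close> for some \<open>k\<close> with \<open>p + k \<ge> 0\<close>, the rows \<open>k..n-1\<close> of
  \<open>det [binom(p + i, A_i - j)]\<close> vanish in the columns \<open>0..k\<close>, so the determinant is zero.\<close>
lemma binom_det_zero_block:
  assumes incr: "incr_seq n A" and k: "k < n" and nonneg: "0 \<le> p + int k"
    and big: "A k > 2 * int k + 1 + p"
  shows "binom_det n A (\<lambda>i. p + int i) = 0"
  unfolding binom_det_def
proof (rule detf_zero_block[OF k])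
  fix i j assume ij: "k \<le> i" "i < n" "j \<le> k"
  have "A k - int k \<le> A i - int i" by (rule incr_seq_row_length_mono[OF incr ij(1) ij(2)])
  then have "p + int i < A i - int (j + 1)" using big ij by simp
  moreover have "0 \<le> p + int i" using ij nonneg by simp
  ultimately show "gbin (p + int i) (A i - int (j + 1)) = 0" by (rule gbin_eq_0_above[rotated])
qed

section \<open>The determinant \<open>D_\<pi>\<close> and the diagram \<open>Y(\<pi>)\<close>\<close>

definition opener_seq :: "(nat \<times> nat) set \<Rightarrow> nat \<Rightarrow> int" where
  "opener_seq M i = int (openers M ! i)"

context
  fixes n :: nat and M :: "(nat \<times> nat) set"
  assumes mt: "is_matching n M"
begin

lemma incr_seq_opener_seq: "incr_seq n (opener_seq M)"
  using incr_seq_openers[OF mt] unfolding opener_seq_def by simp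

lemma Dpi_eq_binom_det: "Dpi n M p = binom_det n (opener_seq M) (\<lambda>i. p + int i)"
  unfolding Dpi_def binom_det_def detf_def opener_def openers_def opener_seq_def by simp

lemma young_eq_shape: "young n M = shape n (opener_seq M)"
proof (rule Set.set_eqI)
  fix x :: "nat \<times> nat"
  obtain r c where x: "x = (r, c)" by (cases x)
  have "1 \<le> r \<Longrightarrow> r \<le> n \<Longrightarrow> opener M (n + 1 - r) = openers M ! (n - r)"
    unfolding opener_def openers_def by (simp add: Suc_diff_le)
  moreover have "1 \<le> r \<Longrightarrow> r \<le> n \<Longrightarrow> int (openers M ! (n - r)) \<ge> int (n - r) + 1"
    using opener_lower_bound[OF mt, of "n - r"] by simp
  ultimately show "x \<in> young n M \<longleftrightarrow> x \<in> shape n (opener_seq M)"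
    unfolding x young_def shape_mem opener_seq_def by (auto simp: of_nat_diff)
qed

lemma young_in_staircase: "(r, c) \<in> young n M \<Longrightarrow> r + c \<le> n"
proof -
  assume "(r, c) \<in> young n M"
  then have rc: "1 \<le> r" "r \<le> n" "int c \<le> opener_seq M (n - r) - int (n - r) - 1"
    by (auto simp: young_eq_shape shape_mem)
  have "openers M ! (n - r) \<le> 2 * (n - r) + 1" by (rule opener_upper_bound[OF mt]) (use rc in simp)
  then show "r + c \<le> n" using rc unfolding opener_seq_def by (simp add: of_nat_diff)
qed

text \<open>The sign relating \<open>D_\<pi>\<close> to the multichoose determinant is \<open>(-1)^{d(\<pi>)}\<close>, since
  \<open>a_i + i\<close> and \<open>a_i - i\<close> have the same parity.\<close>
lemma opener_sign: "(-1::int) ^ (\<Sum>i<n. nat (opener_seq M i) + (i + 1)) = (-1) ^ dpi n M"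
proof -
  have dp: "dpi n M = (\<Sum>i<n. openers M ! i - (i + 1))"
    unfolding dpi_def opener_def openers_def
    by (rule sum.reindex_bij_witness[of _ Suc "\<lambda>i. i - 1"]) auto
  have "(\<Sum>i<n. nat (opener_seq M i) + (i + 1)) = (\<Sum>i<n. (openers M ! i - (i + 1)) + 2 * (i + 1))"
  proof (rule sum.cong)
    fix i assume "i \<in> {..<n}"
    then have "i + 1 \<le> openers M ! i" using opener_lower_bound[OF mt, of i] by simp
    then show "nat (opener_seq M i) + (i + 1) = (openers M ! i - (i + 1)) + 2 * (i + 1)"
      unfolding opener_seq_def by simp
  qed simp
  also have "\<dots> = dpi n M + 2 * (\<Sum>i<n. i + 1)" 
    unfolding dp sum.distrib[of "\<lambda>i. openers M ! i - (i + 1)" "\<lambda>i. 2 * (i + 1)"] sum_distrib_left ..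
  finally show ?thesis by (simp add: power_add power_mult)
qed

lemma Dpi_eq_multichoose_det:
  "Dpi n M p = (-1) ^ dpi n M * multichoose_det n (opener_seq M) (\<lambda>i. - p - int i)"
  using binom_det_reciprocity[of n "opener_seq M" "\<lambda>i. p + int i"] opener_sign
  unfolding Dpi_eq_binom_det opener_seq_def by simp

section \<open>The three parts of the theorem\<close>

text \<open>For \<open>p \<ge> 0\<close> the parameters \<open>t_i = p + i\<close> step up by one, and every row of \<open>Y(\<pi>)\<close>
  gets the same bound \<open>p + n - 1\<close>.\<close>
lemma strict_fill_eq_strict_fillings:
  "strict_fill n (opener_seq M) (\<lambda>i. p + int i) = strict_fillings (young n M) 1 (p + int n - 1)"
proof -
  define t where "t = (\<lambda>i::nat. p + int i)"
  have "\<And>x. x \<in> shape n (opener_seq M) \<Longrightarrow> t (n - fst x) + int (fst x) - 1 = p + int n - 1"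
    unfolding t_def by (auto simp: shape_mem of_nat_diff)
  then have "strict_fill n (opener_seq M) t = strict_fillings (young n M) 1 (p + int n - 1)"
    unfolding strict_fill_def strict_fillings_def young_eq_shape
    by (intro Collect_cong conj_cong refl) (simp add: Ball_def)
  then show ?thesis unfolding t_def .
qed

lemma Dpi_counts_strict_fillings:
  assumes "0 \<le> p"
  shows "Dpi n M p = int (card (strict_fillings (young n M) 1 (p + int n - 1)))"
proof -
  have "unit_steps_up n (\<lambda>i. p + int i)" unfolding unit_steps_up_def using assms by auto
  then show ?thesis
    using binom_det_eq_card_strict_fill[OF incr_seq_opener_seq] strict_fill_eq_strict_fillings
    unfolding Dpi_eq_binom_det by metis
qed

text \<open>Filling box \<open>(r,c)\<close> with \<open>r + c - 1 \<le> n - 1\<close> is strictly increasing.\<close>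
lemma strict_fillings_nonempty:
  assumes "0 \<le> p"
  shows "card (strict_fillings (young n M) 1 (p + int n - 1)) > 0"
proof -
  define f where "f = (\<lambda>x::nat\<times>nat. if x \<in> young n M then int (fst x + snd x) - 1 else 0)"
  have "f (r, c) \<in> {1 .. p + int n - 1}" if "(r, c) \<in> young n M" for r c
    using that young_in_staircase[OF that] assms unfolding f_def by (auto simp: young_def)
  then have "f \<in> strict_fillings (young n M) 1 (p + int n - 1)"
    unfolding strict_fillings_def f_def by auto
  moreover have "finite (strict_fillings (young n M) 1 (p + int n - 1))"
    using finite_strict_fill unfolding strict_fill_eq_strict_fillings[symmetric] .
  ultimately show ?thesis using card_gt_0_iff by blast
qed

text \<open>For \<open>p \<le> -n\<close> the negated parameters \<open>-p - i\<close> step down by one, and every row gets the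
  same bound \<open>|p| - n\<close>.\<close>
lemma weak_fill_eq_weak_fillings:
  assumes "p \<le> - int n"
  shows "weak_fill n (opener_seq M) (\<lambda>i. - p - int i) = weak_fillings (young n M) 0 (\<bar>p\<bar> - int n)"
proof -
  define t where "t = (\<lambda>i::nat. - p - int i)"
  have "\<And>x. x \<in> shape n (opener_seq M) \<Longrightarrow> t (n - fst x) - int (fst x) = \<bar>p\<bar> - int n"
    unfolding t_def using assms by (auto simp: shape_mem of_nat_diff)
  then have "weak_fill n (opener_seq M) t = weak_fillings (young n M) 0 (\<bar>p\<bar> - int n)"
    unfolding weak_fill_def weak_fillings_def young_eq_shape
    by (intro Collect_cong conj_cong refl) (simp add: Ball_def)
  then show ?thesis unfolding t_def .
qed

lemma Dpi_counts_weak_fillings: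
  assumes "p \<le> - int n"
  shows "(-1) ^ dpi n M * Dpi n M p = int (card (weak_fillings (young n M) 0 (\<bar>p\<bar> - int n)))"
proof -
  have "unit_steps_down n (\<lambda>i. - p - int i)" unfolding unit_steps_down_def using assms by auto
  then have "multichoose_det n (opener_seq M) (\<lambda>i. - p - int i) =
      int (card (weak_fillings (young n M) 0 (\<bar>p\<bar> - int n)))"
    using multichoose_det_eq_card_weak_fill[OF incr_seq_opener_seq] weak_fill_eq_weak_fillings[OF assms]
    by metis
  moreover have "(-1::int) ^ dpi n M * (-1) ^ dpi n M = 1"
    by (simp flip: power_add add: power_mult[symmetric])
  ultimately show ?thesis unfolding Dpi_eq_multichoose_det by (simp add: mult.assoc[symmetric])
qed

text \<open>The zero filling is always weakly increasing.\<close>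
lemma weak_fillings_nonempty:
  assumes "p \<le> - int n"
  shows "card (weak_fillings (young n M) 0 (\<bar>p\<bar> - int n)) > 0"
proof -
  have "(\<lambda>_. 0) \<in> weak_fillings (young n M) 0 (\<bar>p\<bar> - int n)"
    unfolding weak_fillings_def using assms by auto
  moreover have "finite (weak_fillings (young n M) 0 (\<bar>p\<bar> - int n))"
    using finite_weak_fill unfolding weak_fill_eq_weak_fillings[OF assms, symmetric] .
  ultimately show ?thesis using card_gt_0_iff by blast
qed

text \<open>At \<open>p = -n\<close> the zero filling is the only one.\<close>
lemma Dpi_at_minus_n: "Dpi n M (- int n) = (-1) ^ dpi n M"
proof -
  have "weak_fillings (young n M) 0 (\<bar>- int n\<bar> - int n) = {\<lambda>_. 0}"
    unfolding weak_fillings_def by (auto intro!: ext)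
  then have "(-1) ^ dpi n M * Dpi n M (- int n) = 1"
    using Dpi_counts_weak_fillings[of "- int n"] by simp
  moreover have "(-1::int) ^ dpi n M * (-1) ^ dpi n M = 1"
    by (simp flip: power_add add: power_mult[symmetric])
  ultimately show ?thesis by (metis mult.assoc mult.right_neutral mult.commute)
qed

text \<open>For \<open>p = -s\<close> with \<open>1 \<le> s < n\<close>: unless \<open>\<pi> = (\<rho>)_s\<close>, some opener \<open>a_k\<close> with \<open>k \<ge> s\<close>
  exceeds \<open>2k + 1 - s\<close>, and the determinant has a vanishing block.\<close>
lemma Dpi_vanishes:
  assumes p: "1 - int n \<le> p" "p \<le> -1"
    and not_surrounded: "\<not> (\<exists>m \<rho>. is_matching m \<rho> \<and> M = surround (nat \<bar>p\<bar>) m \<rho>)"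
  shows "Dpi n M p = 0"
proof -
  define s where "s = nat \<bar>p\<bar>"
  have s: "1 \<le> s" "s < n" "p = - int s" using p unfolding s_def by auto
  obtain k where k: "s \<le> k" "k < n" "openers M ! k > 2 * k + 1 - s"
    using is_matching_strip[OF mt s(1,2)] surround_strip[OF mt s(1,2)] not_surrounded
    unfolding s_def[symmetric] by (meson not_le)
  then have "opener_seq M k > 2 * int k + 1 + p" using s(3) unfolding opener_seq_def by auto
  then show ?thesis unfolding Dpi_eq_binom_det
    by (rule binom_det_zero_block[OF incr_seq_opener_seq k(2), rotated]) (use k(1) s(3) in simp)
qed

end

theorem theorem6p5:
  fixes n :: nat and M :: "(nat \<times> nat) set" and p :: int
  assumes "is_matching n M"
  shows "(p \<ge> 0 \<longrightarrow>
            Dpi n M p = int (card (strict_fillings (young n M) 1 (p + int n - 1))) \<and> Dpi n M p > 0)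
       \<and> (p \<le> - int n \<longrightarrow>
            (-1) ^ dpi n M * Dpi n M p = int (card (weak_fillings (young n M) 0 (\<bar>p\<bar> - int n)))
            \<and> Dpi n M p \<noteq> 0)
       \<and> Dpi n M (- int n) = (-1) ^ dpi n M
       \<and> (1 - int n \<le> p \<and> p \<le> -1 \<and>
            \<not> (\<exists>m \<rho>. is_matching m \<rho> \<and> M = surround (nat \<bar>p\<bar>) m \<rho>)
            \<longrightarrow> Dpi n M p = 0)"
proof (intro conjI impI)
  assume "0 \<le> p"
  then show "Dpi n M p = int (card (strict_fillings (young n M) 1 (p + int n - 1)))"
    and "Dpi n M p > 0"
    using Dpi_counts_strict_fillings[OF assms] strict_fillings_nonempty[OF assms] by auto
next
  assume "p \<le> - int n"
  then show "(-1) ^ dpi n M * Dpi n M p = int (card (weak_fillings (young n M) 0 (\<bar>p\<bar> - int n)))"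
    and "Dpi n M p \<noteq> 0"
    using Dpi_counts_weak_fillings[OF assms] weak_fillings_nonempty[OF assms] by fastforce+
next
  show "Dpi n M (- int n) = (-1) ^ dpi n M" by (rule Dpi_at_minus_n[OF assms])
next
  assume "1 - int n \<le> p \<and> p \<le> -1 \<and>
    \<not> (\<exists>m \<rho>. is_matching m \<rho> \<and> M = surround (nat \<bar>p\<bar>) m \<rho>)"
  then show "Dpi n M p = 0" using Dpi_vanishes[OF assms] by blast
qed

end
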